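(* Under standing assumption (S), let $R$ be a commutative $D$-module algebra which is Noetherian as a ring and simple as a $D$-module algebra, and assume each $g\in G$ acts as an injective endomorphism of $R$. Let $G$ act on $\Omega(R)$ from the right by $P.g=g^{-1}(P)$, let $G_P=\{g\in G:g^{-1}(P)=P\}$ and $G_{\Omega(R)}=\bigcap_{Q\in\Omega(R)}G_Q$. Then: (1) every $P\in\Omega(R)$ is $D^1$-stable, so that $R/P$ is a $D(G_P)$-module domain, and $R/P$ is simple as a $D(G_{\Omega(R)})$-module algebra; (2) the action of $G$ on $\Omega(R)$ is transitive (in particular the stabilizers $G_P$ are conjugate); (3) the natural map $R\to\prod_{P\in\Omega(R)}R/P$ is an isomorphism.
   Context: Standing assumption (S): $C$ is a field, $G$ a monoid, $CG$ the monoid algebra as a $C$-bialgebra with $\Delta(g)=g\otimes g$, $\varepsilon(g)=1$; $D^1$ is a pointed irreducible cocommutative Hopf algebra over $C$ of Birkhoff–Witt type (as a coalgebra the cofree pointed irreducible cocommutative coalgebra $B(U)$ on some $C$-vector space $U$, in Sweedler's sense) which is a $CG$-module algebra; $D=D^1\#CG$ is the smash product and $D(G')=D^1\#CG'$ for a submonoid $G'$. A $D$-module algebra is a $C$-algebra with a $D$-action satisfying $d.(ab)=\sum(d_{(1)}.a)(d_{(2)}.b)$, $d.1=\varepsilon(d)1$; each $g\in G$ acts as a $C$-algebra endomorphism $a\mapsto g.a$, and $g^{-1}(P)$ is the preimage of $P$. An ideal $I$ is $D$-stable (resp. $D^1$-stable) if $d.I\subseteq I$ for all $d\in D$ (resp.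 $D^1$); $R$ is simple if its only $D$-stable ideals are $0$ and $R$. $\Omega(R)$ is the set of minimal prime ideals of $R$. *)

theory Defs
  imports "HOL-Algebra.Algebra" "HOL-Library.Poly_Mapping"
begin

text \<open>A Hopf algebra of Birkhoff--Witt type is, as a coalgebra, Sweedler's B(U).
  Choosing a basis indexed by a set I of U, B(U) has the C-basis e_alpha, alpha
  ranging over finitely supported multi-indices I \<Rightarrow> nat, with
  Delta(e_alpha) = sum over beta+gamma=alpha of e_beta (x) e_gamma and
  eps(e_alpha) = [alpha = 0]; the unique grouplike e_0 is the unit 1.
  We therefore model D1 concretely as the space of finitely supported
  C-valued functions on this basis; the algebra structure is given by
  structure constants m alpha beta = e_alpha * e_beta.\<close>

type_synonym 'i mon = "'i \<Rightarrow>\<^sub>0 nat"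
type_synonym ('i, 'c) vec = "'i mon \<Rightarrow>\<^sub>0 'c"

definition BW_basis :: "'i set \<Rightarrow> 'i mon set" where
  "BW_basis I = {\<alpha>. Poly_Mapping.keys \<alpha> \<subseteq> I}"

definition splits :: "'i mon \<Rightarrow> ('i mon \<times> 'i mon) set" where
  "splits \<alpha> = {(\<beta>, \<gamma>). \<beta> + \<gamma> = \<alpha>}"

definition bvec :: "'i mon \<Rightarrow> ('i, 'c::comm_ring_1) vec" where
  "bvec \<alpha> = Poly_Mapping.single \<alpha> 1"

definition vlin :: "('i mon \<Rightarrow> ('i, 'c::comm_ring_1) vec) \<Rightarrow> ('i, 'c) vec \<Rightarrow> ('i, 'c) vec" where
  "vlin f u = (\<Sum>\<alpha>\<in>Poly_Mapping.keys u. Poly_Mapping.map (\<lambda>c. Poly_Mapping.lookup u \<alpha> * c) (f \<alpha>))"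

definition vmult :: "('i mon \<Rightarrow> 'i mon \<Rightarrow> ('i, 'c::comm_ring_1) vec)
    \<Rightarrow> ('i, 'c) vec \<Rightarrow> ('i, 'c) vec \<Rightarrow> ('i, 'c) vec" where
  "vmult m u v = vlin (\<lambda>\<alpha>. vlin (\<lambda>\<beta>. m \<alpha> \<beta>) v) u"

text \<open>(I, m) defines a Hopf algebra structure on B(U) (with the fixed
  coalgebra structure above): associative unital algebra with unit e_0,
  Delta and eps algebra maps, and an antipode exists.\<close>
definition BW_hopf :: "'i set \<Rightarrow> ('i mon \<Rightarrow> 'i mon \<Rightarrow> ('i, 'c::field) vec) \<Rightarrow> bool" where
  "BW_hopf I m \<longleftrightarrow>
     (\<forall>\<alpha>\<in>BW_basis I. \<forall>\<beta>\<in>BW_basis I. Poly_Mapping.keys (m \<alpha> \<beta>) \<subseteq> BW_basis I) \<and>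
     (\<forall>\<alpha>\<in>BW_basis I. \<forall>\<beta>\<in>BW_basis I. \<forall>\<gamma>\<in>BW_basis I.
        vmult m (m \<alpha> \<beta>) (bvec \<gamma>) = vmult m (bvec \<alpha>) (m \<beta> \<gamma>)) \<and>
     (\<forall>\<alpha>\<in>BW_basis I. m 0 \<alpha> = bvec \<alpha> \<and> m \<alpha> 0 = bvec \<alpha>) \<and>
     (\<forall>\<alpha>\<in>BW_basis I. \<forall>\<beta>\<in>BW_basis I. \<forall>\<delta>1 \<delta>2.
        Poly_Mapping.lookup (m \<alpha> \<beta>) (\<delta>1 + \<delta>2) =
          (\<Sum>(\<alpha>1, \<alpha>2)\<in>splits \<alpha>. \<Sum>(\<beta>1, \<beta>2)\<in>splits \<beta>.
              Poly_Mapping.lookup (m \<alpha>1 \<beta>1) \<delta>1 * Poly_Mapping.lookup (m \<alpha>2 \<beta>2) \<delta>2)) \<and>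
     (\<forall>\<alpha>\<in>BW_basis I. \<forall>\<beta>\<in>BW_basis I.
        Poly_Mapping.lookup (m \<alpha> \<beta>) 0 = (if \<alpha> = 0 \<and> \<beta> = 0 then 1 else 0)) \<and>
     (\<exists>S :: 'i mon \<Rightarrow> ('i, 'c) vec.
        (\<forall>\<alpha>\<in>BW_basis I. Poly_Mapping.keys (S \<alpha>) \<subseteq> BW_basis I) \<and>
        (\<forall>\<alpha>\<in>BW_basis I.
           (\<Sum>(\<beta>, \<gamma>)\<in>splits \<alpha>. vmult m (S \<beta>) (bvec \<gamma>)) = (if \<alpha> = 0 then bvec 0 else 0) \<and>
           (\<Sum>(\<beta>, \<gamma>)\<in>splits \<alpha>. vmult m (bvec \<beta>) (S \<gamma>)) = (if \<alpha> = 0 then bvec 0 else 0)))"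

text \<open>D1 is a CG-module algebra: gact g alpha = g.e_alpha (extended linearly).\<close>
definition CG_module_algebra ::
  "'i set \<Rightarrow> ('i mon \<Rightarrow> 'i mon \<Rightarrow> ('i, 'c::field) vec)
     \<Rightarrow> ('g::monoid_mult \<Rightarrow> 'i mon \<Rightarrow> ('i, 'c) vec) \<Rightarrow> bool" where
  "CG_module_algebra I m gact \<longleftrightarrow>
     (\<forall>g. \<forall>\<alpha>\<in>BW_basis I. Poly_Mapping.keys (gact g \<alpha>) \<subseteq> BW_basis I) \<and>
     (\<forall>\<alpha>\<in>BW_basis I. gact 1 \<alpha> = bvec \<alpha>) \<and>
     (\<forall>g h. \<forall>\<alpha>\<in>BW_basis I. gact (g * h) \<alpha> = vlin (gact g) (gact h \<alpha>)) \<and>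
     (\<forall>g. gact g 0 = bvec 0) \<and>
     (\<forall>g. \<forall>\<alpha>\<in>BW_basis I. \<forall>\<beta>\<in>BW_basis I.
        vlin (gact g) (m \<alpha> \<beta>) = vmult m (gact g \<alpha>) (gact g \<beta>))"

definition C_algebra :: "('a, 'b) ring_scheme \<Rightarrow> ('c::field \<Rightarrow> 'a \<Rightarrow> 'a) \<Rightarrow> bool" where
  "C_algebra R smul \<longleftrightarrow> ring R \<and>
     (\<forall>c. \<forall>a\<in>carrier R. smul c a \<in> carrier R) \<and>
     (\<forall>c. \<forall>a\<in>carrier R. \<forall>b\<in>carrier R. smul c (a \<oplus>\<^bsub>R\<^esub> b) = smul c a \<oplus>\<^bsub>R\<^esub> smul c b) \<and>
     (\<forall>c d. \<forall>a\<in>carrier R. smul (c + d) a = smul c a \<oplus>\<^bsub>R\<^esub> smul d a) \<and>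
     (\<forall>c d. \<forall>a\<in>carrier R. smul (c * d) a = smul c (smul d a)) \<and>
     (\<forall>a\<in>carrier R. smul 1 a = a) \<and>
     (\<forall>c. \<forall>a\<in>carrier R. \<forall>b\<in>carrier R.
        smul c (a \<otimes>\<^bsub>R\<^esub> b) = smul c a \<otimes>\<^bsub>R\<^esub> b \<and> smul c (a \<otimes>\<^bsub>R\<^esub> b) = a \<otimes>\<^bsub>R\<^esub> smul c b)"

text \<open>Action of a vector u of D1 tensored with g, from the action on basis
  elements e_gamma # g.\<close>
definition vact :: "('a, 'b) ring_scheme \<Rightarrow> ('c::field \<Rightarrow> 'a \<Rightarrow> 'a)
    \<Rightarrow> ('i mon \<Rightarrow> 'g \<Rightarrow> 'a \<Rightarrow> 'a) \<Rightarrow> ('i, 'c) vec \<Rightarrow> 'g \<Rightarrow> 'a \<Rightarrow> 'a" where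
  "vact R smul act u g a = (\<Oplus>\<^bsub>R\<^esub>\<gamma>\<in>Poly_Mapping.keys u. smul (Poly_Mapping.lookup u \<gamma>) (act \<gamma> g a))"

text \<open>R is a D-module algebra for D = D1 # CG, where act alpha g a = (e_alpha # g).a.
  The smash product multiplication is
  (e_alpha # g)(e_beta # h) = (e_alpha (g.e_beta)) # gh, and
  Delta(e_alpha # g) = sum over beta+gamma=alpha of (e_beta # g) (x) (e_gamma # g),
  eps(e_alpha # g) = [alpha = 0].\<close>
definition D_module_algebra ::
  "'i set \<Rightarrow> ('i mon \<Rightarrow> 'i mon \<Rightarrow> ('i, 'c::field) vec) \<Rightarrow> ('g::monoid_mult \<Rightarrow> 'i mon \<Rightarrow> ('i, 'c) vec)
     \<Rightarrow> ('a, 'b) ring_scheme \<Rightarrow> ('c \<Rightarrow> 'a \<Rightarrow> 'a) \<Rightarrow> ('i mon \<Rightarrow> 'g \<Rightarrow> 'a \<Rightarrow> 'a) \<Rightarrow> bool" where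
  "D_module_algebra I m gact R smul act \<longleftrightarrow>
     C_algebra R smul \<and>
     (\<forall>\<alpha>\<in>BW_basis I. \<forall>g. \<forall>a\<in>carrier R. act \<alpha> g a \<in> carrier R) \<and>
     (\<forall>\<alpha>\<in>BW_basis I. \<forall>g. \<forall>a\<in>carrier R. \<forall>b\<in>carrier R.
        act \<alpha> g (a \<oplus>\<^bsub>R\<^esub> b) = act \<alpha> g a \<oplus>\<^bsub>R\<^esub> act \<alpha> g b) \<and>
     (\<forall>\<alpha>\<in>BW_basis I. \<forall>g c. \<forall>a\<in>carrier R. act \<alpha> g (smul c a) = smul c (act \<alpha> g a)) \<and>
     (\<forall>a\<in>carrier R. act 0 1 a = a) \<and>
     (\<forall>\<alpha>\<in>BW_basis I. \<forall>\<beta>\<in>BW_basis I. \<forall>g h. \<forall>a\<in>carrier R.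
        act \<alpha> g (act \<beta> h a) = vact R smul act (vmult m (bvec \<alpha>) (gact g \<beta>)) (g * h) a) \<and>
     (\<forall>\<alpha>\<in>BW_basis I. \<forall>g. \<forall>a\<in>carrier R. \<forall>b\<in>carrier R.
        act \<alpha> g (a \<otimes>\<^bsub>R\<^esub> b) =
          finsum R (\<lambda>(\<beta>, \<gamma>). act \<beta> g a \<otimes>\<^bsub>R\<^esub> act \<gamma> g b) (splits \<alpha>)) \<and>
     (\<forall>\<alpha>\<in>BW_basis I. \<forall>g. act \<alpha> g \<one>\<^bsub>R\<^esub> = (if \<alpha> = 0 then \<one>\<^bsub>R\<^esub> else \<zero>\<^bsub>R\<^esub>))"

text \<open>The action of g in G: a \<mapsto> g.a, i.e. the action of e_0 # g.\<close>
abbreviation gmap :: "('i mon \<Rightarrow> 'g \<Rightarrow> 'a \<Rightarrow> 'a) \<Rightarrow> 'g \<Rightarrow> 'a \<Rightarrow> 'a" where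
  "gmap act g \<equiv> act 0 g"

text \<open>Stability of a subset under D(G') = D1 # CG' (G' a submonoid); since ideals
  are C-subspaces it suffices to test on the basis e_alpha # g.
  D1-stable is stability under D({1}), D-stable is stability under D(UNIV).\<close>
definition stable_under :: "'i set \<Rightarrow> ('i mon \<Rightarrow> 'g \<Rightarrow> 'a \<Rightarrow> 'a) \<Rightarrow> 'g set \<Rightarrow> 'a set \<Rightarrow> bool" where
  "stable_under I act G' J \<longleftrightarrow> (\<forall>\<alpha>\<in>BW_basis I. \<forall>g\<in>G'. \<forall>a\<in>J. act \<alpha> g a \<in> J)"

definition D_simple :: "'i set \<Rightarrow> ('a, 'b) ring_scheme \<Rightarrow> ('i mon \<Rightarrow> 'g \<Rightarrow> 'a \<Rightarrow> 'a) \<Rightarrow> bool" where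
  "D_simple I R act \<longleftrightarrow>
     (\<forall>J. ideal J R \<and> stable_under I act UNIV J \<longrightarrow> J = {\<zero>\<^bsub>R\<^esub>} \<or> J = carrier R)"

definition min_primes :: "('a, 'b) ring_scheme \<Rightarrow> 'a set set" where
  "min_primes R = {P. primeideal P R \<and> (\<forall>Q. primeideal Q R \<and> Q \<subseteq> P \<longrightarrow> Q = P)}"

definition gpre :: "('a, 'b) ring_scheme \<Rightarrow> ('i mon \<Rightarrow> 'g \<Rightarrow> 'a \<Rightarrow> 'a) \<Rightarrow> 'g \<Rightarrow> 'a set \<Rightarrow> 'a set" where
  "gpre R act g P = {a \<in> carrier R. act 0 g a \<in> P}"

definition stabilizer :: "('a, 'b) ring_scheme \<Rightarrow> ('i mon \<Rightarrow> 'g \<Rightarrow> 'a \<Rightarrow> 'a) \<Rightarrow> 'a set \<Rightarrow> 'g set" where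
  "stabilizer R act P = {g. gpre R act g P = P}"

definition stabilizer_all :: "('a, 'b) ring_scheme \<Rightarrow> ('i mon \<Rightarrow> 'g \<Rightarrow> 'a \<Rightarrow> 'a) \<Rightarrow> 'g set" where
  "stabilizer_all R act = {g. \<forall>Q\<in>min_primes R. g \<in> stabilizer R act Q}"

text \<open>Induced action on R/P (well defined when P is stable):
  X = P +> x \<mapsto> P +> f x.\<close>
definition quot_act :: "('a, 'b) ring_scheme \<Rightarrow> 'a set \<Rightarrow> ('a \<Rightarrow> 'a) \<Rightarrow> 'a set \<Rightarrow> 'a set" where
  "quot_act R P f Y = a_r_coset R P (f (SOME y. y \<in> Y))"

definition quot_simple :: "'i set \<Rightarrow> ('a, 'b) ring_scheme \<Rightarrow> ('i mon \<Rightarrow> 'g \<Rightarrow> 'a \<Rightarrow> 'a)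
    \<Rightarrow> 'g set \<Rightarrow> 'a set \<Rightarrow> bool" where
  "quot_simple I R act G' P \<longleftrightarrow>
     (\<forall>J. ideal J (R Quot P) \<and>
          (\<forall>\<alpha>\<in>BW_basis I. \<forall>g\<in>G'. \<forall>Y\<in>J. quot_act R P (act \<alpha> g) Y \<in> J)
        \<longrightarrow> J = {\<zero>\<^bsub>R Quot P\<^esub>} \<or> J = carrier (R Quot P))"

definition prod_quot :: "('a, 'b) ring_scheme \<Rightarrow> 'a set set \<Rightarrow> ('a set \<Rightarrow> 'a set) ring" where
  "prod_quot R \<Omega> =
     \<lparr>carrier = (\<Pi>\<^sub>E P\<in>\<Omega>. carrier (R Quot P)),
      Group.monoid.mult = (\<lambda>x y. \<lambda>P\<in>\<Omega>. x P \<otimes>\<^bsub>R Quot P\<^esub> y P),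
      Group.monoid.one = (\<lambda>P\<in>\<Omega>. \<one>\<^bsub>R Quot P\<^esub>),
      Ring.ring.zero = (\<lambda>P\<in>\<Omega>. \<zero>\<^bsub>R Quot P\<^esub>),
      Ring.ring.add = (\<lambda>x y. \<lambda>P\<in>\<Omega>. x P \<oplus>\<^bsub>R Quot P\<^esub> y P)\<rparr>"

end

theory Submission
  imports Defs
begin

text \<open>
  (1) For a prime \<open>P\<close>, the ideal \<open>P\<^sup>\<infinity> = {a. \<forall>\<alpha>. e\<^sub>\<alpha>.a \<in> P}\<close> is again prime
  (\<open>d_core_prime\<close>); the key input is a combinatorial fact about splittings of multi-indices
  (\<open>unique_minimal_split\<close>) applied to the Leibniz rule.  Hence minimal primes are
  \<open>D\<^sup>1\<close>-stable.  (2) In a Noetherian ring there are finitely many minimal primes and their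
  intersection is the nilradical; as each \<open>g\<close> is injective, \<open>g\<^sup>-\<^sup>1\<close> permutes \<open>\<Omega>(R)\<close>.
  (3) Simplicity forces \<open>D\<close>-stable proper ideals to vanish: the nilradical is zero, the
  intersection of a \<open>G\<close>-orbit in \<open>\<Omega>(R)\<close> is zero (prime avoidance then gives transitivity), and
  the ideal \<open>\<Inter>\<^sub>P (P + \<Inter>\<^sub>Q\<^sub>\<noteq>\<^sub>P Q)\<close> is \<open>R\<close>, which yields the Chinese remainder
  isomorphism \<open>R \<cong> \<Prod>\<^sub>P R/P\<close>.  (4) A \<open>D(G\<^sub>\<Omega>\<^sub>(\<^sub>R\<^sub>))\<close>-stable ideal \<open>J \<supset> P\<close> contains a nonzero
  element all of whose \<open>D\<close>-translates stay in \<open>J\<close>, so \<open>J = R\<close> and \<open>R/P\<close> is simple.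
\<close>

subsection \<open>Multi-indices\<close>

lemma lookup_pmap:
  "Poly_Mapping.lookup (Poly_Mapping.map g p) k =
     (if Poly_Mapping.lookup p k = 0 then 0 else g (Poly_Mapping.lookup p k))"
  by (simp add: Poly_Mapping.map.rep_eq when_def)

lemma lookup_bvec: "Poly_Mapping.lookup (bvec \<alpha> :: ('i, 'c::comm_ring_1) vec) \<beta> = (if \<beta> = \<alpha> then 1 else 0)"
  by (simp add: bvec_def lookup_single)

lemma keys_bvec [simp]: "Poly_Mapping.keys (bvec \<alpha> :: ('i, 'c::comm_ring_1) vec) = {\<alpha>}"
  by (simp add: bvec_def)

lemma vlin_bvec [simp]: "vlin f (bvec \<alpha> :: ('i, 'c::comm_ring_1) vec) = f \<alpha>"
proof -
  have "Poly_Mapping.map (\<lambda>c. c) (f \<alpha>) = f \<alpha>"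
    by (rule poly_mapping_eqI) (simp add: lookup_pmap)
  then show ?thesis by (simp add: vlin_def lookup_bvec)
qed

lemma vmult_bvec_bvec [simp]: "vmult m (bvec \<alpha>) (bvec \<beta>) = m \<alpha> \<beta>"
  by (simp add: vmult_def)

lemma keys_vlin:
  "Poly_Mapping.keys (vlin f u) \<subseteq> (\<Union>\<alpha>\<in>Poly_Mapping.keys u. Poly_Mapping.keys (f \<alpha>))"
proof -
  have "Poly_Mapping.keys (vlin f u) \<subseteq>
      (\<Union>\<alpha>\<in>Poly_Mapping.keys u. Poly_Mapping.keys (Poly_Mapping.map (\<lambda>c. Poly_Mapping.lookup u \<alpha> * c) (f \<alpha>)))"
    unfolding vlin_def by (rule keys_sum)
  also have "\<dots> \<subseteq> (\<Union>\<alpha>\<in>Poly_Mapping.keys u. Poly_Mapping.keys (f \<alpha>))"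
    by (intro UN_mono) (auto simp: in_keys_iff lookup_pmap split: if_splits)
  finally show ?thesis .
qed

lemma keys_vmult:
  "Poly_Mapping.keys (vmult m u v) \<subseteq>
     (\<Union>\<alpha>\<in>Poly_Mapping.keys u. \<Union>\<beta>\<in>Poly_Mapping.keys v. Poly_Mapping.keys (m \<alpha> \<beta>))"
proof -
  have "Poly_Mapping.keys (vmult m u v) \<subseteq> (\<Union>\<alpha>\<in>Poly_Mapping.keys u. Poly_Mapping.keys (vlin (m \<alpha>) v))"
    unfolding vmult_def by (rule keys_vlin)
  also have "\<dots> \<subseteq> (\<Union>\<alpha>\<in>Poly_Mapping.keys u. \<Union>\<beta>\<in>Poly_Mapping.keys v. Poly_Mapping.keys (m \<alpha> \<beta>))"
    by (intro UN_mono) (auto intro: keys_vlin[THEN subsetD])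
  finally show ?thesis .
qed

lemma finite_pointwise_below:
  "finite {\<beta> :: 'i mon. \<forall>k. Poly_Mapping.lookup \<beta> k \<le> Poly_Mapping.lookup \<alpha> k}"
proof -
  let ?S = "{\<beta> :: 'i mon. \<forall>k. Poly_Mapping.lookup \<beta> k \<le> Poly_Mapping.lookup \<alpha> k}"
  let ?h = "\<lambda>\<beta>::'i mon. restrict (Poly_Mapping.lookup \<beta>) (Poly_Mapping.keys \<alpha>)"
  have "inj_on ?h ?S"
  proof (rule inj_onI)
    fix x y assume x: "x \<in> ?S" and y: "y \<in> ?S" and e: "?h x = ?h y"
    show "x = y"
    proof (rule poly_mapping_eqI)
      fix k show "Poly_Mapping.lookup x k = Poly_Mapping.lookup y k"
      proof (cases "k \<in> Poly_Mapping.keys \<alpha>")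
        case True thus ?thesis using fun_cong[OF e, of k] by simp
      next
        case False
        then have "Poly_Mapping.lookup \<alpha> k = 0" by (simp add: in_keys_iff)
        moreover have "Poly_Mapping.lookup x k \<le> Poly_Mapping.lookup \<alpha> k" using x by simp
        moreover have "Poly_Mapping.lookup y k \<le> Poly_Mapping.lookup \<alpha> k" using y by simp
        ultimately show ?thesis by simp
      qed
    qed
  qed
  moreover have "?h ` ?S \<subseteq> PiE (Poly_Mapping.keys \<alpha>) (\<lambda>k. {0..Poly_Mapping.lookup \<alpha> k})"
  proof (rule image_subsetI)
    fix \<beta> assume "\<beta> \<in> ?S"
    then show "?h \<beta> \<in> PiE (Poly_Mapping.keys \<alpha>) (\<lambda>k. {0..Poly_Mapping.lookup \<alpha> k})"
      by (simp add: restrict_PiE_iff)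
  qed
  moreover have "finite (PiE (Poly_Mapping.keys \<alpha>) (\<lambda>k. {0..Poly_Mapping.lookup \<alpha> k}))"
    by (rule finite_PiE) auto
  ultimately have "finite (?h ` ?S)" by (meson finite_subset)
  then show ?thesis using \<open>inj_on ?h ?S\<close> by (rule finite_imageD)
qed

lemma finite_splits: "finite (splits (\<alpha> :: 'i mon))"
proof -
  have "splits \<alpha> \<subseteq> (\<lambda>\<beta>. (\<beta>, \<alpha> - \<beta>)) ` {\<beta>. \<forall>k. Poly_Mapping.lookup \<beta> k \<le> Poly_Mapping.lookup \<alpha> k}"
  proof
    fix p assume "p \<in> splits \<alpha>"
    then obtain \<beta> \<gamma> where p: "p = (\<beta>, \<gamma>)" "\<beta> + \<gamma> = \<alpha>" by (auto simp: splits_def)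
    then have "\<gamma> = \<alpha> - \<beta>" by auto
    moreover have "\<forall>k. Poly_Mapping.lookup \<beta> k \<le> Poly_Mapping.lookup \<alpha> k"
    proof
      fix k
      have "Poly_Mapping.lookup \<alpha> k = Poly_Mapping.lookup \<beta> k + Poly_Mapping.lookup \<gamma> k"
        using p(2) lookup_add by metis
      then show "Poly_Mapping.lookup \<beta> k \<le> Poly_Mapping.lookup \<alpha> k" by simp
    qed
    ultimately show "p \<in> (\<lambda>\<beta>. (\<beta>, \<alpha> - \<beta>)) ` {\<beta>. \<forall>k. Poly_Mapping.lookup \<beta> k \<le> Poly_Mapping.lookup \<alpha> k}"
      using p by auto
  qed
  moreover have "finite ((\<lambda>\<beta>. (\<beta>, \<alpha> - \<beta>)) ` {\<beta>. \<forall>k. Poly_Mapping.lookup \<beta> k \<le> Poly_Mapping.lookup \<alpha> k})"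
    using finite_pointwise_below by (rule finite_imageI)
  ultimately show ?thesis by (rule finite_subset)
qed

text \<open>The only splitting of \<open>0\<close> is \<open>0 + 0\<close>, so \<open>e\<^sub>0 = 1\<close> acts by ring endomorphisms.\<close>
lemma mon_add_eq_zero: "(a::'i mon) + b = 0 \<Longrightarrow> a = 0 \<and> b = 0"
proof -
  assume h: "a + b = 0"
  have "\<forall>k. Poly_Mapping.lookup a k + Poly_Mapping.lookup b k = 0"
    using h by (metis lookup_add lookup_zero)
  then show ?thesis by (simp add: poly_mapping_eq_iff fun_eq_iff)
qed

lemma splits_zero: "splits (0 :: 'i mon) = {(0,0)}"
  by (auto simp: splits_def dest: mon_add_eq_zero)

lemma keys_summand: "Poly_Mapping.keys \<beta> \<subseteq> Poly_Mapping.keys (\<beta> + (\<gamma> :: 'i mon))"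
  by (auto simp: in_keys_iff lookup_add)

definition total_deg :: "'i mon \<Rightarrow> nat" where
  "total_deg \<gamma> = (\<Sum>k\<in>Poly_Mapping.keys \<gamma>. Poly_Mapping.lookup \<gamma> k)"

lemma total_deg_on: "finite K \<Longrightarrow> Poly_Mapping.keys \<gamma> \<subseteq> K \<Longrightarrow> total_deg \<gamma> = (\<Sum>k\<in>K. Poly_Mapping.lookup \<gamma> k)"
  unfolding total_deg_def by (rule sum.mono_neutral_left) (auto simp: in_keys_iff)

lemma total_deg_add: "total_deg (\<gamma> + \<delta>) = total_deg \<gamma> + total_deg \<delta>"
proof -
  let ?K = "Poly_Mapping.keys \<gamma> \<union> Poly_Mapping.keys \<delta>"
  have "total_deg (\<gamma> + \<delta>) = (\<Sum>k\<in>?K. Poly_Mapping.lookup \<gamma> k + Poly_Mapping.lookup \<delta> k)"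
    using total_deg_on[of ?K "\<gamma> + \<delta>"] keys_add[of \<gamma> \<delta>] by (simp add: lookup_add)
  also have "\<dots> = total_deg \<gamma> + total_deg \<delta>"
    using total_deg_on[of ?K \<gamma>] total_deg_on[of ?K \<delta>] by (simp add: sum.distrib)
  finally show ?thesis .
qed

lemma finite_bounded_degree:
  assumes K: "finite K"
  shows "finite {\<gamma> :: 'i mon. Poly_Mapping.keys \<gamma> \<subseteq> K \<and> total_deg \<gamma> = d}"
proof (rule finite_subset[OF _ finite_pointwise_below])
  define N :: "'i mon" where "N = (\<Sum>k\<in>K. Poly_Mapping.single k d)"
  have lookup_N: "Poly_Mapping.lookup N k = (if k \<in> K then d else 0)" for k
    using K by (simp add: N_def lookup_sum lookup_single when_def)
  have "Poly_Mapping.lookup \<gamma> k \<le> total_deg \<gamma>" for \<gamma> :: "'i mon" and k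
    by (cases "k \<in> Poly_Mapping.keys \<gamma>") (auto simp: total_deg_def in_keys_iff intro!: member_le_sum)
  then show "{\<gamma> :: 'i mon. Poly_Mapping.keys \<gamma> \<subseteq> K \<and> total_deg \<gamma> = d} \<subseteq>
      {\<beta>. \<forall>k. Poly_Mapping.lookup \<beta> k \<le> Poly_Mapping.lookup N k}"
    by (auto simp: lookup_N in_keys_iff)
qed

text \<open>Enumerating a finite set \<open>K = {e 0, \<dots>, e (n - 1)}\<close> of indices transports the
  lexicographic order of \<open>nat \<Rightarrow>\<^sub>0 nat\<close> to multi-indices supported in \<open>K\<close>: a linear
  order compatible with addition.\<close>
definition lex_embed :: "(nat \<Rightarrow> 'i) \<Rightarrow> nat \<Rightarrow> 'i mon \<Rightarrow> (nat \<Rightarrow>\<^sub>0 nat)" where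
  "lex_embed e n \<gamma> = Abs_poly_mapping (\<lambda>j. if j < n then Poly_Mapping.lookup \<gamma> (e j) else 0)"

lemma lookup_lex_embed:
  "Poly_Mapping.lookup (lex_embed e n \<gamma>) j = (if j < n then Poly_Mapping.lookup \<gamma> (e j) else 0)"
proof -
  have "finite {j. (if j < n then Poly_Mapping.lookup \<gamma> (e j) else 0) \<noteq> 0}"
    by (rule finite_subset[of _ "{..<n}"]) auto
  then show ?thesis unfolding lex_embed_def by simp
qed

lemma lex_embed_add: "lex_embed e n (\<gamma> + \<delta>) = lex_embed e n \<gamma> + lex_embed e n \<delta>"
  by (rule poly_mapping_eqI) (simp add: lookup_lex_embed lookup_add)

lemma lex_embed_inj:
  assumes e: "bij_betw e {0..<n} K"
    and "Poly_Mapping.keys \<gamma> \<subseteq> K" "Poly_Mapping.keys \<delta> \<subseteq> K"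
    and eq: "lex_embed e n \<gamma> = lex_embed e n \<delta>"
  shows "\<gamma> = \<delta>"
proof (rule poly_mapping_eqI)
  fix k
  show "Poly_Mapping.lookup \<gamma> k = Poly_Mapping.lookup \<delta> k"
  proof (cases "k \<in> K")
    case True
    then obtain j where "j < n" "k = e j" using e by (auto simp: bij_betw_def)
    then show ?thesis using arg_cong[OF eq, of "\<lambda>p. Poly_Mapping.lookup p j"]
      by (simp add: lookup_lex_embed)
  next
    case False
    then have "k \<notin> Poly_Mapping.keys \<gamma>" "k \<notin> Poly_Mapping.keys \<delta>" using assms(2,3) by auto
    then show ?thesis by (simp add: in_keys_iff)
  qed
qed

lemma unique_split_of_minima:
  fixes \<phi> :: "'a::cancel_comm_monoid_add \<Rightarrow> 'b::{linorder, ordered_cancel_comm_monoid_add}"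
  assumes add: "\<And>x y. \<phi> (x + y) = \<phi> x + \<phi> y" and inj: "inj_on \<phi> A"
    and \<alpha>: "\<alpha> \<in> A" "\<And>x. x \<in> A \<Longrightarrow> \<phi> \<alpha> \<le> \<phi> x" and \<beta>: "\<And>y. y \<in> B \<Longrightarrow> \<phi> \<beta> \<le> \<phi> y"
    and \<gamma>: "\<gamma> \<in> A" and \<delta>: "\<delta> \<in> B" and sum: "\<gamma> + \<delta> = \<alpha> + \<beta>"
  shows "\<gamma> = \<alpha> \<and> \<delta> = \<beta>"
proof -
  have \<phi>_sum: "\<phi> \<gamma> + \<phi> \<delta> = \<phi> \<alpha> + \<phi> \<beta>" using sum add by metis
  have "\<phi> \<alpha> = \<phi> \<gamma>"
  proof (rule ccontr)
    assume "\<phi> \<alpha> \<noteq> \<phi> \<gamma>"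
    then have "\<phi> \<alpha> < \<phi> \<gamma>" using \<alpha>(2)[OF \<gamma>] by simp
    then have "\<phi> \<alpha> + \<phi> \<beta> < \<phi> \<gamma> + \<phi> \<delta>" using \<beta>[OF \<delta>] by (rule add_less_le_mono)
    then show False using \<phi>_sum by simp
  qed
  then have "\<gamma> = \<alpha>" using inj \<alpha>(1) \<gamma> by (auto simp: inj_on_def)
  then show ?thesis using sum by simp
qed

text \<open>Take \<open>\<alpha>, \<beta>\<close> of minimal
  degree, and among those (supported in a common finite set \<open>K\<close>) lexicographically minimal.\<close>
lemma unique_minimal_split:
  fixes Sa Sb :: "'i mon set"
  assumes "Sa \<noteq> {}" "Sb \<noteq> {}"
  obtains \<alpha> \<beta> where "\<alpha> \<in> Sa" "\<beta> \<in> Sb"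
    "\<And>\<gamma> \<delta>. \<gamma> \<in> Sa \<Longrightarrow> \<delta> \<in> Sb \<Longrightarrow> \<gamma> + \<delta> = \<alpha> + \<beta> \<Longrightarrow> \<gamma> = \<alpha> \<and> \<delta> = \<beta>"
proof -
  obtain \<alpha>0 where \<alpha>0: "\<alpha>0 \<in> Sa" "\<And>\<gamma>. \<gamma> \<in> Sa \<Longrightarrow> total_deg \<alpha>0 \<le> total_deg \<gamma>"
    using assms(1) ex_has_least_nat[of "\<lambda>\<gamma>. \<gamma> \<in> Sa" _ total_deg] by blast
  obtain \<beta>0 where \<beta>0: "\<beta>0 \<in> Sb" "\<And>\<gamma>. \<gamma> \<in> Sb \<Longrightarrow> total_deg \<beta>0 \<le> total_deg \<gamma>"
    using assms(2) ex_has_least_nat[of "\<lambda>\<gamma>. \<gamma> \<in> Sb" _ total_deg] by blast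
  define K where "K = Poly_Mapping.keys \<alpha>0 \<union> Poly_Mapping.keys \<beta>0"
  define n where "n = card K"
  have "finite K" by (simp add: K_def)
  then obtain e where e: "bij_betw e {0..<n} K"
    unfolding n_def using ex_bij_betw_nat_finite by blast
  define Ca where "Ca = {\<gamma> \<in> Sa. Poly_Mapping.keys \<gamma> \<subseteq> K \<and> total_deg \<gamma> = total_deg \<alpha>0}"
  define Cb where "Cb = {\<delta> \<in> Sb. Poly_Mapping.keys \<delta> \<subseteq> K \<and> total_deg \<delta> = total_deg \<beta>0}"
  have "finite Ca" "finite Cb"
    using finite_bounded_degree[OF \<open>finite K\<close>] unfolding Ca_def Cb_def
    by (auto intro: rev_finite_subset)
  moreover have "\<alpha>0 \<in> Ca" "\<beta>0 \<in> Cb"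
    using \<alpha>0 \<beta>0 by (auto simp: Ca_def Cb_def K_def)
  ultimately obtain \<alpha> \<beta> where
      \<alpha>: "is_arg_min (lex_embed e n) (\<lambda>x. x \<in> Ca) \<alpha>" and \<beta>: "is_arg_min (lex_embed e n) (\<lambda>x. x \<in> Cb) \<beta>"
    by (metis empty_iff ex_is_arg_min_if_finite)
  then have \<alpha>C: "\<alpha> \<in> Ca" and \<beta>C: "\<beta> \<in> Cb" by (auto simp: is_arg_min_def)
  have in_C: "\<gamma> \<in> Ca \<and> \<delta> \<in> Cb" if \<gamma>: "\<gamma> \<in> Sa" and \<delta>: "\<delta> \<in> Sb" and sum: "\<gamma> + \<delta> = \<alpha> + \<beta>" for \<gamma> \<delta>
  proof -
    have "total_deg \<gamma> + total_deg \<delta> = total_deg \<alpha>0 + total_deg \<beta>0"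
      using sum \<alpha>C \<beta>C by (metis (mono_tags, lifting) Ca_def Cb_def total_deg_add mem_Collect_eq)
    then have "total_deg \<gamma> = total_deg \<alpha>0" "total_deg \<delta> = total_deg \<beta>0"
      using \<alpha>0(2)[OF \<gamma>] \<beta>0(2)[OF \<delta>] by linarith+
    moreover have "Poly_Mapping.keys (\<gamma> + \<delta>) \<subseteq> K"
      using sum keys_add[of \<alpha> \<beta>] \<alpha>C \<beta>C by (auto simp: Ca_def Cb_def)
    then have "Poly_Mapping.keys \<gamma> \<subseteq> K" "Poly_Mapping.keys \<delta> \<subseteq> K"
      using keys_summand[of \<gamma> \<delta>] keys_summand[of \<delta> \<gamma>] by (auto simp: add.commute)
    ultimately show ?thesis using \<gamma> \<delta> by (auto simp: Ca_def Cb_def)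
  qed
  have inj: "inj_on (lex_embed e n) Ca"
    using lex_embed_inj[OF e] by (auto simp: inj_on_def Ca_def)
  show ?thesis
  proof (rule that)
    show "\<alpha> \<in> Sa" "\<beta> \<in> Sb" using \<alpha>C \<beta>C by (auto simp: Ca_def Cb_def)
    fix \<gamma> \<delta> assume "\<gamma> \<in> Sa" "\<delta> \<in> Sb" "\<gamma> + \<delta> = \<alpha> + \<beta>"
    with in_C show "\<gamma> = \<alpha> \<and> \<delta> = \<beta>"
      using unique_split_of_minima[OF lex_embed_add inj, of \<alpha> Cb \<beta>] \<alpha> \<beta>
      by (auto simp: is_arg_min_linorder)
  qed
qed

lemma bij_funpow_periodic:
  assumes A: "finite A" and f: "bij_betw f A A"
  shows "\<exists>d>0. \<forall>x\<in>A. (f ^^ d) x = x"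
proof -
  let ?p = "\<lambda>k. restrict (f ^^ k) A"
  have "range ?p \<subseteq> (\<Pi>\<^sub>E x\<in>A. A)"
    using bij_betw_apply[OF bij_betw_funpow[OF f]] by auto
  moreover have "finite (\<Pi>\<^sub>E x\<in>A. A)" using A by (intro finite_PiE) auto
  ultimately have "\<not> inj ?p" using finite_imageD infinite_UNIV_nat finite_subset by blast
  then obtain i j where ij: "i < j" "?p i = ?p j"
    unfolding inj_def by (metis linorder_neqE_nat)
  have "(f ^^ (j - i)) x = x" if x: "x \<in> A" for x
  proof -
    have "(f ^^ i) ((f ^^ (j - i)) x) = (f ^^ (i + (j - i))) x"
      by (simp only: funpow_add comp_apply)
    also have "\<dots> = (f ^^ i) x" using fun_cong[OF ij(2), of x] x ij(1) by simp
    finally have "(f ^^ i) ((f ^^ (j - i)) x) = (f ^^ i) x" .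
    moreover have "(f ^^ (j - i)) x \<in> A" using bij_betw_apply[OF bij_betw_funpow[OF f] x] .
    ultimately show ?thesis
      using bij_betw_funpow[OF f, of i] x by (auto simp: bij_betw_def inj_on_def)
  qed
  then show ?thesis using ij(1) by (intro exI[of _ "j - i"]) auto
qed

subsection \<open>Ideals in commutative rings\<close>

context ring
begin

lemma ideal_zero: "ideal J R \<Longrightarrow> \<zero> \<in> J"
  by (simp add: additive_subgroup.zero_closed ideal.axioms(1))

lemma ideal_add: "ideal J R \<Longrightarrow> x \<in> J \<Longrightarrow> y \<in> J \<Longrightarrow> x \<oplus> y \<in> J"
  by (simp add: additive_subgroup.a_closed ideal.axioms(1))

lemma ideal_neg: "ideal J R \<Longrightarrow> x \<in> J \<Longrightarrow> \<ominus> x \<in> J"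
  by (simp add: additive_subgroup.a_inv_closed ideal.axioms(1))

lemma ideal_minus: "ideal J R \<Longrightarrow> x \<in> J \<Longrightarrow> y \<in> J \<Longrightarrow> x \<ominus> y \<in> J"
  by (simp add: a_minus_def ideal_add ideal_neg)

lemma ideal_finsum_closed:
  assumes J: "ideal J R" and "finite A" and f: "\<And>x. x \<in> A \<Longrightarrow> f x \<in> J"
  shows "finsum R f A \<in> J"
  using \<open>finite A\<close> f
proof (induction A rule: finite_induct)
  case empty
  then show ?case using J by (simp add: ideal_zero)
next
  case (insert x A)
  have "f \<in> insert x A \<rightarrow> carrier R" using insert ideal.Icarr[OF J] by blast
  then show ?case using insert by (simp add: finsum_insert ideal_add[OF J])
qed

lemma rcos_eq_iff:
  assumes J: "ideal J R" and x: "x \<in> carrier R" and y: "y \<in> carrier R"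
  shows "J +> x = J +> y \<longleftrightarrow> x \<ominus> y \<in> J"
proof -
  have sg: "abelian_subgroup J R"
    using abelian_subgroupI3[OF ideal.axioms(1)[OF J] is_abelian_group] .
  have "J +> x = J +> y \<longleftrightarrow> x \<in> J +> y"
    using abelian_subgroup.a_rcos_self[OF sg x] abelian_subgroup.a_repr_independence'[OF sg _ y]
    by metis
  also have "\<dots> \<longleftrightarrow> x \<ominus> y \<in> J"
    using abelian_subgroup.a_rcos_module_minus[OF sg ring_axioms y x] .
  finally show ?thesis .
qed

lemma rcos_zero: "ideal J R \<Longrightarrow> J +> \<zero> = J"
  using abelian_subgroup.a_rcos_const[OF abelian_subgroupI3[OF ideal.axioms(1) is_abelian_group]]
    ideal_zero by blast

lemma set_add_memI: "x \<in> H \<Longrightarrow> y \<in> K \<Longrightarrow> x \<oplus> y \<in> H <+> K"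
  by (auto simp: set_add_def')

lemma quot_carrier_rep: "Y \<in> carrier (R Quot J) \<Longrightarrow> \<exists>r\<in>carrier R. Y = J +> r"
  unfolding FactRing_def A_RCOSETS_def RCOSETS_def a_r_coset_def by auto

end

context cring
begin

lemma prime_one_notin: "primeideal P R \<Longrightarrow> \<one> \<notin> P"
  using ideal.one_imp_carrier primeideal.I_notcarr primeideal.axioms(1) by blast

lemma prime_pow_mem:
  assumes Q: "primeideal Q R" and y: "y \<in> carrier R" and "y [^] (n::nat) \<in> Q"
  shows "y \<in> Q"
  using \<open>y [^] n \<in> Q\<close>
proof (induction n)
  case 0
  then show ?case using prime_one_notin[OF Q] by simp
next
  case (Suc n)
  then show ?case using primeideal.I_prime[OF Q, of "y [^] n" y] y by auto
qed

lemma prime_finprod_notin: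
  assumes Q: "primeideal Q R" and "finite F" and x: "\<And>P. P \<in> F \<Longrightarrow> x P \<in> carrier R - Q"
  shows "finprod R x F \<notin> Q"
  using \<open>finite F\<close> x
proof (induction F rule: finite_induct)
  case empty
  then show ?case using prime_one_notin[OF Q] by simp
next
  case (insert a F)
  have "x \<in> insert a F \<rightarrow> carrier R" using insert by auto
  then have "finprod R x (insert a F) = x a \<otimes> finprod R x F"
    using insert by (simp add: finprod_insert)
  moreover have "finprod R x F \<in> carrier R"
    using insert by (auto intro: finprod_closed)
  ultimately show ?case
    using insert.IH insert.prems primeideal.I_prime[OF Q, of "x a" "finprod R x F"] by auto
qed

lemma ideal_finprod_mem:
  assumes J: "ideal J R" and "finite F" and x: "x \<in> F \<rightarrow> carrier R" and a: "a \<in> F" "x a \<in> J"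
  shows "finprod R x F \<in> J"
proof -
  have "F = insert a (F - {a})" using a by blast
  then have "finprod R x F = x a \<otimes> finprod R x (F - {a})"
    using \<open>finite F\<close> x a by (metis finite_Diff finprod_insert Diff_iff singletonI Pi_split_insert_domain)
  moreover have "finprod R x (F - {a}) \<in> carrier R" using x by (auto intro: finprod_closed)
  ultimately show ?thesis using a J by (simp add: ideal.I_r_closed)
qed

lemma prime_contains_one_of:
  assumes Q: "primeideal Q R" and "finite F" and F: "\<And>P. P \<in> F \<Longrightarrow> ideal P R"
    and sub: "\<And>y. y \<in> carrier R \<Longrightarrow> (\<forall>P\<in>F. y \<in> P) \<Longrightarrow> y \<in> Q"
  shows "\<exists>P\<in>F. P \<subseteq> Q"
proof (rule ccontr)
  assume "\<not> (\<exists>P\<in>F. P \<subseteq> Q)"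
  then have "\<forall>P\<in>F. \<exists>y. y \<in> P \<and> y \<notin> Q" by blast
  then obtain x where x: "\<And>P. P \<in> F \<Longrightarrow> x P \<in> P \<and> x P \<notin> Q" by metis
  have xc: "\<And>P. P \<in> F \<Longrightarrow> x P \<in> carrier R" using x F by (meson ideal.Icarr)
  have "finprod R x F \<notin> Q" using prime_finprod_notin[OF Q \<open>finite F\<close>] x xc by blast
  moreover have "finprod R x F \<in> carrier R" using xc by (auto intro: finprod_closed)
  moreover have "\<forall>P\<in>F. finprod R x F \<in> P"
    using ideal_finprod_mem[OF F \<open>finite F\<close>] xc x by blast
  ultimately show False using sub by blast
qed

definition colon :: "'a set \<Rightarrow> 'a set \<Rightarrow> 'a set" where
  "colon M S = {x \<in> carrier R. \<forall>z\<in>S. x \<otimes> z \<in> M}"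

lemma colon_ideal:
  assumes M: "ideal M R" and S: "S \<subseteq> carrier R"
  shows "ideal (colon M S) R"
proof (rule idealI)
  show "ring R" by (rule ring_axioms)
  show "subgroup (colon M S) (add_monoid R)"
  proof (rule add.subgroupI)
    show "colon M S \<subseteq> carrier R" by (auto simp: colon_def)
    have "\<zero> \<in> colon M S" using S ideal_zero[OF M] by (auto simp: colon_def subset_iff)
    then show "colon M S \<noteq> {}" by blast
    fix a b assume a: "a \<in> colon M S" and b: "b \<in> colon M S"
    show "\<ominus> a \<in> colon M S"
      using a S ideal_neg[OF M] by (auto simp: colon_def l_minus subset_iff)
    show "a \<oplus> b \<in> colon M S"
      using a b S ideal_add[OF M] by (auto simp: colon_def l_distr subset_iff)
  qed
  fix a x assume a: "a \<in> colon M S" and x: "x \<in> carrier R"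
  then show "x \<otimes> a \<in> colon M S"
    using S ideal.I_l_closed[OF M] by (auto simp: colon_def m_assoc subset_iff)
  then show "a \<otimes> x \<in> colon M S"
    using a x by (simp add: colon_def m_comm)
qed

lemma crt_rearrange:
  "a \<in> carrier R \<Longrightarrow> b \<in> carrier R \<Longrightarrow> c \<in> carrier R \<Longrightarrow> a \<otimes> b \<oplus> c \<ominus> a = a \<otimes> (b \<ominus> \<one>) \<oplus> c"
  by algebra

definition prime_cover :: "'a set \<Rightarrow> 'a set set \<Rightarrow> bool" where
  "prime_cover J F \<longleftrightarrow> finite F \<and> (\<forall>P\<in>F. primeideal P R \<and> J \<subseteq> P) \<and>
      (\<forall>y\<in>carrier R. (\<forall>P\<in>F. y \<in> P) \<longrightarrow> (\<exists>n::nat. y [^] n \<in> J))"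

text \<open>If \<open>ab \<in> M\<close>, then prime covers of \<open>M + (a)\<close> and \<open>M + (b)\<close> together cover \<open>M\<close>:
  since \<open>(M + (a))(M + (b)) \<subseteq> M\<close>, some power of every element of the radicals of both
  lies in \<open>M\<close>.\<close>
lemma prime_cover_factors:
  assumes M: "ideal M R" and ab: "a \<in> carrier R" "b \<in> carrier R" "a \<otimes> b \<in> M"
    and F1: "prime_cover (Idl (insert a M)) F1" and F2: "prime_cover (Idl (insert b M)) F2"
  shows "prime_cover M (F1 \<union> F2)"
proof -
  define M1 where "M1 = Idl (insert a M)"
  define M2 where "M2 = Idl (insert b M)"
  have Mc: "M \<subseteq> carrier R" using ideal.Icarr[OF M] by blast
  have M1s: "insert a M \<subseteq> M1" and M2s: "insert b M \<subseteq> M2"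
    unfolding M1_def M2_def using ab Mc by (auto intro!: genideal_self[THEN subsetD])
  have M2i: "ideal M2 R" using ab Mc by (simp add: M2_def genideal_ideal)
  have M2col: "M2 \<subseteq> colon M {a}"
    unfolding M2_def
  proof (rule genideal_minimal)
    show "ideal (colon M {a}) R" using colon_ideal[OF M] ab by simp
    show "insert b M \<subseteq> colon M {a}"
      using ab Mc ideal.I_r_closed[OF M] by (auto simp: colon_def m_comm)
  qed
  have M1col: "M1 \<subseteq> colon M M2"
    unfolding M1_def
  proof (rule genideal_minimal)
    show "ideal (colon M M2) R" using colon_ideal[OF M] ideal.Icarr[OF M2i] by blast
    have "a \<otimes> z \<in> M" if "z \<in> M2" for z
      using that M2col ideal.Icarr[OF M2i] ab by (auto simp: colon_def m_comm)
    then show "insert a M \<subseteq> colon M M2"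
      using ab Mc ideal.I_r_closed[OF M] ideal.Icarr[OF M2i] by (auto simp: colon_def)
  qed
  have primes_over_M: "primeideal P R \<and> M \<subseteq> P" if "P \<in> F1 \<union> F2" for P
  proof -
    have "M \<subseteq> M1" "M \<subseteq> M2" using M1s M2s by auto
    then show ?thesis using that F1 F2 unfolding prime_cover_def M1_def M2_def
      by (meson Un_iff order_trans)
  qed
  have radical_in_M: "\<exists>n::nat. y [^] n \<in> M" if y: "y \<in> carrier R" "\<forall>P\<in>F1 \<union> F2. y \<in> P" for y
  proof -
    obtain n1 :: nat where "y [^] n1 \<in> M1" using F1 y unfolding prime_cover_def M1_def by blast
    moreover obtain n2 :: nat where "y [^] n2 \<in> M2" using F2 y unfolding prime_cover_def M2_def by blast
    ultimately have "y [^] n1 \<otimes> y [^] n2 \<in> M" using M1col by (auto simp: colon_def)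
    then have "y [^] (n1 + n2) \<in> M" using y by (simp add: nat_pow_mult)
    then show ?thesis by blast
  qed
  have "finite (F1 \<union> F2)" using F1 F2 by (simp add: prime_cover_def)
  then show ?thesis unfolding prime_cover_def using primes_over_M radical_in_M by blast
qed

end

lemma min_primes_prime: "P \<in> min_primes R \<Longrightarrow> primeideal P R"
  by (simp add: min_primes_def)

lemma min_primes_minimal: "P \<in> min_primes R \<Longrightarrow> primeideal Q R \<Longrightarrow> Q \<subseteq> P \<Longrightarrow> Q = P"
  by (simp add: min_primes_def)

lemma min_primes_ideal: "P \<in> min_primes R \<Longrightarrow> ideal P R"
  by (simp add: min_primes_def primeideal.axioms(1))

subsection \<open>Minimal primes of a Noetherian commutative ring\<close>

locale noetherian_cring = noetherian_ring + cring

context noetherian_cring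
begin

text \<open>In a Noetherian ring the radical of every ideal is a finite intersection of primes:
  a maximal counterexample \<open>M\<close> is neither \<open>R\<close> nor prime, and \<open>ab \<in> M\<close> with \<open>a, b \<notin> M\<close>
  contradicts \<open>prime_cover_factors\<close>.\<close>
lemma ex_prime_cover:
  assumes "ideal J R"
  shows "\<exists>F. prime_cover J F"
proof (rule ccontr)
  define B where "B = {J. ideal J R \<and> (\<nexists>F. prime_cover J F)}"
  assume "\<nexists>F. prime_cover J F"
  then have "B \<noteq> {}" using assms by (auto simp: B_def)
  have "\<exists>M\<in>B. \<forall>Y\<in>B. M \<subseteq> Y \<longrightarrow> Y = M"
  proof (rule subset_Zorn_nonempty[OF \<open>B \<noteq> {}\<close>])
    fix C assume C: "C \<noteq> {}" "subset.chain B C"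
    then have "subset.chain {I. ideal I R} C"
      unfolding pred_on.chain_def B_def by blast
    then have "\<Union>C \<in> C" using ideal_chain_is_trivial[OF C(1)] by blast
    then show "\<Union>C \<in> B" using C(2) unfolding pred_on.chain_def by blast
  qed
  then obtain M where "M \<in> B" and Mmax: "\<And>Y. Y \<in> B \<Longrightarrow> M \<subseteq> Y \<Longrightarrow> Y = M" by blast
  then have Mi: "ideal M R" and Mg: "\<nexists>F. prime_cover M F" by (auto simp: B_def)
  have Mc: "M \<subseteq> carrier R" using ideal.Icarr[OF Mi] by blast
  have "M \<noteq> carrier R"
  proof
    assume "M = carrier R"
    then have "prime_cover M {}" by (auto simp: prime_cover_def intro: exI[of _ 1])
    then show False using Mg by blast
  qed
  moreover have "\<not> primeideal M R"
  proof
    assume "primeideal M R"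
    then have "prime_cover M {M}" by (auto simp: prime_cover_def intro: exI[of _ 1])
    then show False using Mg by blast
  qed
  ultimately obtain a b where ab: "a \<in> carrier R" "b \<in> carrier R" "a \<otimes> b \<in> M" "a \<notin> M" "b \<notin> M"
    using Mi by (metis is_cring primeideal.intro primeideal_axioms.intro)
  have covered: "\<exists>F. prime_cover (Idl (insert x M)) F" if "x \<in> carrier R" "x \<notin> M" for x
  proof -
    have "ideal (Idl (insert x M)) R" "M \<subseteq> Idl (insert x M)" "x \<in> Idl (insert x M)"
      using that Mc by (auto simp: genideal_ideal intro!: genideal_self[THEN subsetD])
    then show ?thesis using Mmax[of "Idl (insert x M)"] that by (auto simp: B_def)
  qed
  then obtain F1 F2 where "prime_cover (Idl (insert a M)) F1" "prime_cover (Idl (insert b M)) F2"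
    using ab by blast
  then have "prime_cover M (F1 \<union> F2)" by (rule prime_cover_factors[OF Mi ab(1-3)])
  then show False using Mg by blast
qed

lemma nil_prime_cover:
  obtains F where "finite F" "\<And>P. P \<in> F \<Longrightarrow> primeideal P R"
    "\<And>y. y \<in> carrier R \<Longrightarrow> \<forall>P\<in>F. y \<in> P \<Longrightarrow> \<exists>n::nat. y [^] n = \<zero>"
  using ex_prime_cover[OF zeroideal] by (auto simp: prime_cover_def)

lemma nilpotent_in_prime:
  assumes "primeideal Q R" "y \<in> carrier R" "y [^] (n::nat) = \<zero>"
  shows "y \<in> Q"
  using prime_pow_mem[OF assms(1,2), of n] assms(3) ideal_zero[OF primeideal.axioms(1)[OF assms(1)]]
  by simp

text \<open>Every prime contains one of the primes of a cover of the nilradical, hence a minimal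
  prime; consequently the minimal primes are among those finitely many primes.\<close>
lemma cover_below_prime:
  assumes "finite F" "\<And>P. P \<in> F \<Longrightarrow> primeideal P R"
    "\<And>y. y \<in> carrier R \<Longrightarrow> \<forall>P\<in>F. y \<in> P \<Longrightarrow> \<exists>n::nat. y [^] n = \<zero>"
    and Q: "primeideal Q R"
  shows "\<exists>P\<in>F. P \<subseteq> Q"
proof (rule prime_contains_one_of[OF Q assms(1)])
  show "\<And>P. P \<in> F \<Longrightarrow> ideal P R" using assms(2) primeideal.axioms(1) by blast
  fix y assume "y \<in> carrier R" "\<forall>P\<in>F. y \<in> P"
  then show "y \<in> Q" using assms(3) nilpotent_in_prime[OF Q] by blast
qed

lemma prime_contains_min_prime:
  assumes Q: "primeideal Q R"
  shows "\<exists>P\<in>min_primes R. P \<subseteq> Q"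
proof -
  obtain F where F: "finite F" "\<And>P. P \<in> F \<Longrightarrow> primeideal P R"
      "\<And>y. y \<in> carrier R \<Longrightarrow> \<forall>P\<in>F. y \<in> P \<Longrightarrow> \<exists>n::nat. y [^] n = \<zero>"
    using nil_prime_cover by blast
  define S where "S = {P\<in>F. P \<subseteq> Q}"
  have "S \<noteq> {}" using cover_below_prime[OF F Q] by (auto simp: S_def)
  moreover have "finite S" using F(1) by (simp add: S_def)
  ultimately obtain p where p: "p \<in> S" and pmin: "\<forall>b\<in>S. b \<subseteq> p \<longrightarrow> p = b"
    using finite_has_minimal[of S] by blast
  have "p \<in> min_primes R"
    unfolding min_primes_def
  proof (intro CollectI conjI allI impI)
    show "primeideal p R" using p F(2) by (simp add: S_def)
    fix Q' assume Q': "primeideal Q' R \<and> Q' \<subseteq> p"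
    then obtain P' where "P' \<in> F" "P' \<subseteq> Q'" using cover_below_prime[OF F] by blast
    then have "P' \<in> S" "P' \<subseteq> p" using Q' p by (auto simp: S_def)
    then have "p = P'" using pmin by blast
    then show "Q' = p" using \<open>P' \<subseteq> Q'\<close> Q' by blast
  qed
  then show ?thesis using p by (auto simp: S_def)
qed

lemma finite_min_primes: "finite (min_primes R)"
proof -
  obtain F where F: "finite F" "\<And>P. P \<in> F \<Longrightarrow> primeideal P R"
      "\<And>y. y \<in> carrier R \<Longrightarrow> \<forall>P\<in>F. y \<in> P \<Longrightarrow> \<exists>n::nat. y [^] n = \<zero>"
    using nil_prime_cover by blast
  have "min_primes R \<subseteq> F"
    using cover_below_prime[OF F min_primes_prime] F(2) min_primes_minimal by blast
  then show ?thesis using F(1) by (rule finite_subset)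
qed

lemma in_all_min_primes_nilpotent:
  assumes y: "y \<in> carrier R" and yP: "\<forall>P\<in>min_primes R. y \<in> P"
  shows "\<exists>n::nat. y [^] n = \<zero>"
proof -
  obtain F where F: "finite F" "\<And>P. P \<in> F \<Longrightarrow> primeideal P R"
      "\<And>y. y \<in> carrier R \<Longrightarrow> \<forall>P\<in>F. y \<in> P \<Longrightarrow> \<exists>n::nat. y [^] n = \<zero>"
    using nil_prime_cover by blast
  have "\<forall>P'\<in>F. y \<in> P'" using prime_contains_min_prime F(2) yP by blast
  then show ?thesis using F(3) y by blast
qed

lemma min_prime_separation:
  assumes P: "P \<in> min_primes R"
  shows "\<exists>b\<in>carrier R. b \<notin> P \<and> (\<forall>Q\<in>min_primes R - {P}. b \<in> Q)"
proof (rule ccontr)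
  assume "\<not> ?thesis"
  then have "\<exists>Q\<in>min_primes R - {P}. Q \<subseteq> P"
    by (intro prime_contains_one_of[OF min_primes_prime[OF P]])
      (use finite_min_primes min_primes_ideal in auto)
  then obtain Q where "Q \<in> min_primes R" "Q \<noteq> P" "Q \<subseteq> P" by blast
  then show False using min_primes_minimal[OF P min_primes_prime] by blast
qed

end

subsection \<open>D-module algebras\<close>

locale D_module_alg = cring R for R :: "('a, 'b) ring_scheme" (structure) +
  fixes I :: "'i set"
    and m :: "'i mon \<Rightarrow> 'i mon \<Rightarrow> ('i, 'c::field) vec"
    and gact :: "'g::monoid_mult \<Rightarrow> 'i mon \<Rightarrow> ('i, 'c) vec"
    and smul :: "'c \<Rightarrow> 'a \<Rightarrow> 'a"
    and act :: "'i mon \<Rightarrow> 'g \<Rightarrow> 'a \<Rightarrow> 'a"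
  assumes hopf: "BW_hopf I m"
    and CG: "CG_module_algebra I m gact"
    and modalg: "D_module_algebra I m gact R smul act"
begin

lemma BW_basis_zero [simp]: "0 \<in> BW_basis I"
  by (simp add: BW_basis_def)

lemma BW_basis_add: "\<beta> \<in> BW_basis I \<Longrightarrow> \<gamma> \<in> BW_basis I \<Longrightarrow> \<beta> + \<gamma> \<in> BW_basis I"
  unfolding BW_basis_def using keys_add[of \<beta> \<gamma>] by blast

lemma BW_basis_splits:
  assumes "\<alpha> \<in> BW_basis I" "(\<beta>, \<gamma>) \<in> splits \<alpha>"
  shows "\<beta> \<in> BW_basis I" "\<gamma> \<in> BW_basis I"
  using assms keys_summand[of \<beta> \<gamma>] keys_summand[of \<gamma> \<beta>]
  by (auto simp: BW_basis_def splits_def add.commute)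

lemma act_closed: "\<alpha> \<in> BW_basis I \<Longrightarrow> a \<in> carrier R \<Longrightarrow> act \<alpha> g a \<in> carrier R"
  using modalg by (simp add: D_module_algebra_def)

lemma act_add:
  "\<alpha> \<in> BW_basis I \<Longrightarrow> a \<in> carrier R \<Longrightarrow> b \<in> carrier R \<Longrightarrow> act \<alpha> g (a \<oplus> b) = act \<alpha> g a \<oplus> act \<alpha> g b"
  using modalg by (simp add: D_module_algebra_def)

lemma act_unit: "a \<in> carrier R \<Longrightarrow> act 0 1 a = a"
  using modalg by (simp add: D_module_algebra_def)

lemma act_comp:
  "\<alpha> \<in> BW_basis I \<Longrightarrow> \<beta> \<in> BW_basis I \<Longrightarrow> a \<in> carrier R \<Longrightarrow>
     act \<alpha> g (act \<beta> h a) = vact R smul act (vmult m (bvec \<alpha>) (gact g \<beta>)) (g * h) a"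
  using modalg by (simp add: D_module_algebra_def)

lemma act_mult:
  "\<alpha> \<in> BW_basis I \<Longrightarrow> a \<in> carrier R \<Longrightarrow> b \<in> carrier R \<Longrightarrow>
     act \<alpha> g (a \<otimes> b) = finsum R (\<lambda>(\<beta>, \<gamma>). act \<beta> g a \<otimes> act \<gamma> g b) (splits \<alpha>)"
  using modalg by (simp add: D_module_algebra_def)

lemma act_one: "\<alpha> \<in> BW_basis I \<Longrightarrow> act \<alpha> g \<one> = (if \<alpha> = 0 then \<one> else \<zero>)"
  using modalg by (simp add: D_module_algebra_def)

lemma act_zero: "\<alpha> \<in> BW_basis I \<Longrightarrow> act \<alpha> g \<zero> = \<zero>"
proof -
  assume \<alpha>: "\<alpha> \<in> BW_basis I"
  have "act \<alpha> g \<zero> \<oplus> \<zero> = act \<alpha> g \<zero> \<oplus> act \<alpha> g \<zero>"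
    using act_add[OF \<alpha>, of \<zero> \<zero> g] act_closed[OF \<alpha>, of \<zero> g] by simp
  then show ?thesis using add.l_cancel act_closed[OF \<alpha>, of \<zero> g] by (metis zero_closed)
qed

lemma act_minus:
  assumes "\<alpha> \<in> BW_basis I" "a \<in> carrier R" "b \<in> carrier R"
  shows "act \<alpha> g (a \<ominus> b) = act \<alpha> g a \<ominus> act \<alpha> g b"
proof -
  have "act \<alpha> g (\<ominus> b) \<oplus> act \<alpha> g b = \<zero>"
    using act_add[OF assms(1), of "\<ominus> b" b g] assms(3) act_zero[OF assms(1)] by (simp add: l_neg)
  then have "act \<alpha> g (\<ominus> b) = \<ominus> act \<alpha> g b"
    using act_closed[OF assms(1)] assms(3) by (metis a_inv_closed minus_equality)
  then show ?thesis using assms by (simp add: a_minus_def act_add)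
qed

lemma gact_zero: "gact g 0 = bvec 0"
  using CG by (simp add: CG_module_algebra_def)

lemma m_unit: "\<alpha> \<in> BW_basis I \<Longrightarrow> m 0 \<alpha> = bvec \<alpha> \<and> m \<alpha> 0 = bvec \<alpha>"
  using hopf by (simp add: BW_hopf_def)

lemma vact_bvec: "\<alpha> \<in> BW_basis I \<Longrightarrow> a \<in> carrier R \<Longrightarrow> vact R smul act (bvec \<alpha>) g a = act \<alpha> g a"
  using modalg by (simp add: vact_def lookup_bvec act_closed C_algebra_def D_module_algebra_def)

lemma smul_ideal: "ideal J R \<Longrightarrow> x \<in> J \<Longrightarrow> smul c x \<in> J"
proof -
  assume J: "ideal J R" and x: "x \<in> J"
  have Calg: "C_algebra R smul" using modalg by (simp add: D_module_algebra_def)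
  have xc: "x \<in> carrier R" using J x by (meson ideal.Icarr)
  have "smul c x = smul c (\<one> \<otimes> x)" using xc by simp
  also have "\<dots> = smul c \<one> \<otimes> x" using Calg xc one_closed unfolding C_algebra_def by blast
  finally show ?thesis using J x Calg by (simp add: C_algebra_def ideal.I_l_closed)
qed

text \<open>To show \<open>(e\<^sub>\<alpha> # g)(e\<^sub>\<beta> # h).a \<in> J\<close> it suffices that all \<open>(e\<^sub>\<gamma> # gh).a\<close> lie in \<open>J\<close>,
  since the product is a combination of the \<open>e\<^sub>\<gamma> # gh\<close>.\<close>
lemma act_comp_ideal:
  assumes J: "ideal J R" and \<alpha>: "\<alpha> \<in> BW_basis I" and \<beta>: "\<beta> \<in> BW_basis I" and a: "a \<in> carrier R"
    and h: "\<And>\<gamma>. \<gamma> \<in> BW_basis I \<Longrightarrow> act \<gamma> (g * h) a \<in> J"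
  shows "act \<alpha> g (act \<beta> h a) \<in> J"
proof -
  let ?v = "vmult m (bvec \<alpha>) (gact g \<beta>)"
  have "Poly_Mapping.keys (gact g \<beta>) \<subseteq> BW_basis I"
    using CG \<beta> by (simp add: CG_module_algebra_def)
  moreover have "Poly_Mapping.keys (m \<alpha> \<gamma>) \<subseteq> BW_basis I" if "\<gamma> \<in> BW_basis I" for \<gamma>
    using hopf \<alpha> that by (simp add: BW_hopf_def)
  ultimately have "Poly_Mapping.keys ?v \<subseteq> BW_basis I"
    using keys_vmult[of m "bvec \<alpha>" "gact g \<beta>"] by fastforce
  then have "vact R smul act ?v (g * h) a \<in> J"
    unfolding vact_def
    by (intro ideal_finsum_closed[OF J]) (use h smul_ideal[OF J] in auto)
  then show ?thesis using act_comp[OF \<alpha> \<beta> a] by simp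
qed

lemma act_mult_ideal:
  assumes J: "ideal J R" and \<alpha>: "\<alpha> \<in> BW_basis I" and ab: "a \<in> carrier R" "b \<in> carrier R"
    and h: "\<And>\<beta> \<gamma>. (\<beta>, \<gamma>) \<in> splits \<alpha> \<Longrightarrow> act \<beta> g a \<otimes> act \<gamma> g b \<in> J"
  shows "act \<alpha> g (a \<otimes> b) \<in> J"
proof -
  have "finsum R (\<lambda>(\<beta>, \<gamma>). act \<beta> g a \<otimes> act \<gamma> g b) (splits \<alpha>) \<in> J"
    by (rule ideal_finsum_closed[OF J finite_splits]) (use h in auto)
  then show ?thesis using act_mult[OF \<alpha> ab] by simp
qed

lemma act_split: "\<alpha> \<in> BW_basis I \<Longrightarrow> a \<in> carrier R \<Longrightarrow> act \<alpha> g a = act \<alpha> 1 (act 0 g a)"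
  by (simp add: act_comp gact_zero m_unit vact_bvec)

lemma gmap_comp: "a \<in> carrier R \<Longrightarrow> act 0 g (act 0 h a) = act 0 (g * h) a"
  by (simp add: act_comp gact_zero m_unit vact_bvec)

lemma gmap_mult: "a \<in> carrier R \<Longrightarrow> b \<in> carrier R \<Longrightarrow> act 0 g (a \<otimes> b) = act 0 g a \<otimes> act 0 g b"
  using act_mult[of 0 a b g] by (simp add: splits_zero act_closed)

lemma gmap_ring_hom: "ring_hom_ring R R (act 0 g)"
proof -
  have "act 0 g \<in> ring_hom R R"
    by (intro ring_hom_memI) (auto simp: act_closed act_add act_one gmap_mult)
  then show ?thesis by (rule ring_hom_ringI2[OF ring_axioms ring_axioms])
qed

lemma gpre_ideal: "ideal P R \<Longrightarrow> ideal (gpre R act g P) R"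
  unfolding gpre_def using ring_hom_ring.ideal_vimage[OF gmap_ring_hom] by blast

lemma gpre_prime:
  assumes P: "primeideal P R"
  shows "primeideal (gpre R act g P) R"
proof (rule primeidealI)
  show "ideal (gpre R act g P) R" by (rule gpre_ideal[OF primeideal.axioms(1)[OF P]])
  show "cring R" by (rule is_cring)
  show "carrier R \<noteq> gpre R act g P"
  proof
    assume "carrier R = gpre R act g P"
    then have "act 0 g \<one> \<in> P" unfolding gpre_def by blast
    then show False using prime_one_notin[OF P] act_one[of 0 g] by simp
  qed
  fix a b assume "a \<in> carrier R" "b \<in> carrier R" "a \<otimes> b \<in> gpre R act g P"
  then show "a \<in> gpre R act g P \<or> b \<in> gpre R act g P"
    using primeideal.I_prime[OF P] gmap_mult act_closed
    by (auto simp: gpre_def)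
qed

lemma gpre_mult: "gpre R act (g * h) P = gpre R act h (gpre R act g P)"
  by (auto simp: gpre_def gmap_comp act_closed)

lemma gpre_one: "P \<subseteq> carrier R \<Longrightarrow> gpre R act 1 P = P"
  by (auto simp: gpre_def act_unit)

lemma gpre_power: "P \<subseteq> carrier R \<Longrightarrow> gpre R act (h ^ k) P = (gpre R act h ^^ k) P"
proof (induction k arbitrary: P)
  case 0
  then show ?case by (simp add: gpre_one)
next
  case (Suc k)
  have "gpre R act h P \<subseteq> carrier R" by (auto simp: gpre_def)
  then show ?case using Suc.IH by (simp add: gpre_mult funpow_Suc_right del: funpow.simps)
qed

lemma stabilizer_power:
  assumes "h \<in> stabilizer R act P" "P \<subseteq> carrier R"
  shows "h ^ k \<in> stabilizer R act P"
proof -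
  have "(gpre R act h ^^ k) P = P" using assms(1)
    by (induction k) (simp_all add: stabilizer_def)
  then show ?thesis using gpre_power[OF assms(2)] by (simp add: stabilizer_def)
qed

lemma stabilizer_all_one: "1 \<in> stabilizer_all R act"
proof -
  have "gpre R act 1 Q = Q" if "Q \<in> min_primes R" for Q
    using gpre_one ideal.Icarr[OF min_primes_ideal[OF that]] by blast
  then show ?thesis by (simp add: stabilizer_all_def stabilizer_def)
qed

text \<open>For \<open>g = 1\<close> and \<open>J\<close> prime
  this is the largest \<open>D\<^sup>1\<close>-stable ideal \<open>P\<^sup>\<infinity>\<close> contained in \<open>P\<close>.\<close>
definition d_core :: "'a set \<Rightarrow> 'g \<Rightarrow> 'a set" where
  "d_core J g = {a \<in> carrier R. \<forall>\<alpha>\<in>BW_basis I. act \<alpha> g a \<in> J}"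

text \<open>By the Leibniz rule, \<open>d_core J g\<close> is an ideal whenever \<open>J\<close> is.\<close>
lemma d_core_ideal:
  assumes J: "ideal J R"
  shows "ideal (d_core J g) R"
proof (rule idealI)
  show "ring R" by (rule ring_axioms)
  show "subgroup (d_core J g) (add_monoid R)"
  proof (rule add.subgroupI)
    show "d_core J g \<subseteq> carrier R" by (auto simp: d_core_def)
    have "\<zero> \<in> d_core J g" using act_zero ideal_zero[OF J] by (simp add: d_core_def)
    then show "d_core J g \<noteq> {}" by blast
    fix a b assume a: "a \<in> d_core J g" and b: "b \<in> d_core J g"
    then have ab: "a \<in> carrier R" "b \<in> carrier R" by (auto simp: d_core_def)
    have "act \<alpha> g (\<ominus> a) = \<ominus> act \<alpha> g a" if "\<alpha> \<in> BW_basis I" for \<alpha>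
      using act_minus[OF that zero_closed ab(1)] act_zero[OF that] act_closed[OF that ab(1)] ab(1)
      by (simp add: minus_eq)
    then show "\<ominus> a \<in> d_core J g"
      using a ab ideal_neg[OF J] by (simp add: d_core_def)
    show "a \<oplus> b \<in> d_core J g"
      using a b ab act_add ideal_add[OF J] by (simp add: d_core_def)
  qed
  fix a x assume a: "a \<in> d_core J g" and x: "x \<in> carrier R"
  have ac: "a \<in> carrier R" using a by (simp add: d_core_def)
  have "act \<alpha> g (x \<otimes> a) \<in> J" if \<alpha>: "\<alpha> \<in> BW_basis I" for \<alpha>
  proof (rule act_mult_ideal[OF J \<alpha> x ac])
    fix \<beta> \<gamma> assume "(\<beta>, \<gamma>) \<in> splits \<alpha>"
    then show "act \<beta> g x \<otimes> act \<gamma> g a \<in> J"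
      using BW_basis_splits[OF \<alpha>] a x act_closed ideal.I_l_closed[OF J] by (simp add: d_core_def)
  qed
  then show "x \<otimes> a \<in> d_core J g" using x ac by (simp add: d_core_def)
  then show "a \<otimes> x \<in> d_core J g" using x ac by (simp add: m_comm)
qed

lemma d_core_subset: "d_core J 1 \<subseteq> J"
proof
  fix a assume "a \<in> d_core J 1"
  then have "a \<in> carrier R" "act 0 1 a \<in> J" by (auto simp: d_core_def)
  then show "a \<in> J" by (simp add: act_unit)
qed

lemma act_mult_single_term:
  assumes J: "ideal J R" and \<kappa>: "\<kappa> \<in> BW_basis I" and a: "a \<in> carrier R" and b: "b \<in> carrier R"
    and split: "(\<beta>, \<gamma>) \<in> splits \<kappa>" and prod: "act \<kappa> g (a \<otimes> b) \<in> J"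
    and others: "\<And>\<beta>' \<gamma>'. (\<beta>', \<gamma>') \<in> splits \<kappa> \<Longrightarrow> (\<beta>', \<gamma>') \<noteq> (\<beta>, \<gamma>) \<Longrightarrow> act \<beta>' g a \<otimes> act \<gamma>' g b \<in> J"
  shows "act \<beta> g a \<otimes> act \<gamma> g b \<in> J"
proof -
  define f where "f = (\<lambda>(\<beta>', \<gamma>'). act \<beta>' g a \<otimes> act \<gamma>' g b)"
  define A where "A = splits \<kappa> - {(\<beta>, \<gamma>)}"
  have fc: "f p \<in> carrier R" if "p \<in> splits \<kappa>" for p
  proof -
    obtain \<beta>' \<gamma>' where "p = (\<beta>', \<gamma>')" by fastforce
    then show ?thesis using that BW_basis_splits[OF \<kappa>] a b act_closed by (simp add: f_def)
  qed
  have "act \<kappa> g (a \<otimes> b) = finsum R f (insert (\<beta>, \<gamma>) A)"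
    using act_mult[OF \<kappa> a b] split by (simp add: f_def A_def insert_absorb)
  also have "\<dots> = f (\<beta>, \<gamma>) \<oplus> finsum R f A"
  proof (rule finsum_insert)
    show "finite A" using finite_splits by (simp add: A_def)
    show "(\<beta>, \<gamma>) \<notin> A" by (simp add: A_def)
    show "f \<in> A \<rightarrow> carrier R" using fc by (simp add: A_def Pi_def)
    show "f (\<beta>, \<gamma>) \<in> carrier R" using fc split by simp
  qed
  finally have "f (\<beta>, \<gamma>) \<oplus> finsum R f A \<in> J" using prod by simp
  moreover have "finsum R f A \<in> J"
    unfolding A_def by (rule ideal_finsum_closed[OF J]) (use finite_splits others in \<open>auto simp: f_def\<close>)
  moreover have "f (\<beta>, \<gamma>) = (f (\<beta>, \<gamma>) \<oplus> finsum R f A) \<ominus> finsum R f A"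
    using fc split by (simp add: A_def a_minus_def a_assoc r_neg finsum_closed Pi_def)
  ultimately have "f (\<beta>, \<gamma>) \<in> J" using ideal_minus[OF J] by metis
  then show ?thesis by (simp add: f_def)
qed

text \<open>Suppose \<open>ab \<in> P\<^sup>\<infinity>\<close> but \<open>a, b \<notin> P\<^sup>\<infinity>\<close>; choose
  \<open>\<alpha>, \<beta>\<close> using \<open>unique_minimal_split\<close> among the indices with \<open>e\<^sub>\<alpha>.a \<notin> P\<close>,
  \<open>e\<^sub>\<beta>.b \<notin> P\<close>.  In the Leibniz expansion of \<open>e\<^sub>\<alpha>\<^sub>+\<^sub>\<beta>.(ab) \<in> P\<close> every term but
  \<open>(e\<^sub>\<alpha>.a)(e\<^sub>\<beta>.b)\<close> lies in \<open>P\<close>, so that term does too, contradicting primality of \<open>P\<close>.\<close>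
lemma d_core_prime:
  assumes P: "primeideal P R"
  shows "primeideal (d_core P 1) R"
proof (rule primeidealI)
  have Pi: "ideal P R" using P by (rule primeideal.axioms(1))
  show "ideal (d_core P 1) R" using d_core_ideal[OF Pi] .
  show "cring R" by (rule is_cring)
  show "carrier R \<noteq> d_core P 1" using d_core_subset prime_one_notin[OF P] one_closed by blast
  fix a b assume a: "a \<in> carrier R" and b: "b \<in> carrier R" and ab: "a \<otimes> b \<in> d_core P 1"
  show "a \<in> d_core P 1 \<or> b \<in> d_core P 1"
  proof (rule ccontr)
    define Sa where "Sa = {\<gamma> \<in> BW_basis I. act \<gamma> 1 a \<notin> P}"
    define Sb where "Sb = {\<delta> \<in> BW_basis I. act \<delta> 1 b \<notin> P}"
    assume "\<not> (a \<in> d_core P 1 \<or> b \<in> d_core P 1)"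
    then have "Sa \<noteq> {}" "Sb \<noteq> {}" using a b by (auto simp: d_core_def Sa_def Sb_def)
    then obtain \<alpha> \<beta> where \<alpha>: "\<alpha> \<in> Sa" and \<beta>: "\<beta> \<in> Sb"
      and unique: "\<And>\<gamma> \<delta>. \<gamma> \<in> Sa \<Longrightarrow> \<delta> \<in> Sb \<Longrightarrow> \<gamma> + \<delta> = \<alpha> + \<beta> \<Longrightarrow> \<gamma> = \<alpha> \<and> \<delta> = \<beta>"
      by (rule unique_minimal_split) auto
    have \<alpha>\<beta>: "\<alpha> + \<beta> \<in> BW_basis I" using \<alpha> \<beta> by (simp add: Sa_def Sb_def BW_basis_add)
    have "act \<alpha> 1 a \<otimes> act \<beta> 1 b \<in> P"
    proof (rule act_mult_single_term[OF Pi \<alpha>\<beta> a b])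
      show "(\<alpha>, \<beta>) \<in> splits (\<alpha> + \<beta>)" by (simp add: splits_def)
      show "act (\<alpha> + \<beta>) 1 (a \<otimes> b) \<in> P" using ab \<alpha>\<beta> by (simp add: d_core_def)
      fix \<gamma> \<delta> assume split: "(\<gamma>, \<delta>) \<in> splits (\<alpha> + \<beta>)" "(\<gamma>, \<delta>) \<noteq> (\<alpha>, \<beta>)"
      note \<gamma>\<delta> = BW_basis_splits[OF \<alpha>\<beta> split(1)]
      show "act \<gamma> 1 a \<otimes> act \<delta> 1 b \<in> P"
      proof (cases "act \<gamma> 1 a \<in> P \<or> act \<delta> 1 b \<in> P")
        case True
        then show ?thesis
          using ideal.I_r_closed[OF Pi] ideal.I_l_closed[OF Pi] act_closed \<gamma>\<delta> a b by auto
      next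
        case False
        then have "\<gamma> \<in> Sa" "\<delta> \<in> Sb" using \<gamma>\<delta> by (auto simp: Sa_def Sb_def)
        then show ?thesis using unique split by (auto simp: splits_def)
      qed
    qed
    then have "act \<alpha> 1 a \<in> P \<or> act \<beta> 1 b \<in> P"
      using primeideal.I_prime[OF P, of "act \<alpha> 1 a" "act \<beta> 1 b"] act_closed a b \<alpha> \<beta>
      by (simp add: Sa_def Sb_def)
    then show False using \<alpha> \<beta> by (simp add: Sa_def Sb_def)
  qed
qed

text \<open>Part (1a) of the theorem: minimal primes are \<open>D\<^sup>1\<close>-stable, since \<open>P\<^sup>\<infinity> \<subseteq> P\<close> is prime.\<close>
lemma min_prime_d_core: "P \<in> min_primes R \<Longrightarrow> d_core P 1 = P"
  by (rule min_primes_minimal[OF _ d_core_prime[OF min_primes_prime] d_core_subset])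

lemma min_prime_D1_stable:
  "P \<in> min_primes R \<Longrightarrow> \<alpha> \<in> BW_basis I \<Longrightarrow> x \<in> P \<Longrightarrow> act \<alpha> 1 x \<in> P"
proof -
  assume "P \<in> min_primes R" "\<alpha> \<in> BW_basis I" "x \<in> P"
  then have "x \<in> d_core P 1" by (simp add: min_prime_d_core)
  then show "act \<alpha> 1 x \<in> P" using \<open>\<alpha> \<in> BW_basis I\<close> by (simp add: d_core_def)
qed

lemma stable_under_UNIV_I:
  assumes J: "ideal J R"
    and gmap: "\<And>a h. a \<in> J \<Longrightarrow> act 0 h a \<in> J"
    and D1: "\<And>a \<alpha>. a \<in> J \<Longrightarrow> \<alpha> \<in> BW_basis I \<Longrightarrow> act \<alpha> 1 a \<in> J"
  shows "stable_under I act UNIV J"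
  unfolding stable_under_def
proof (intro ballI)
  fix \<alpha> h a assume \<alpha>: "\<alpha> \<in> BW_basis I" and a: "a \<in> J"
  have "act \<alpha> h a = act \<alpha> 1 (act 0 h a)" using act_split[OF \<alpha> ideal.Icarr[OF J a]] .
  then show "act \<alpha> h a \<in> J" using gmap D1 a \<alpha> by simp
qed

lemma Inter_d_core_stable:
  assumes J: "ideal J R"
  shows "stable_under I act UNIV (\<Inter>(range (d_core J)))"
  unfolding stable_under_def
proof (intro ballI)
  fix \<alpha> g a assume \<alpha>: "\<alpha> \<in> BW_basis I" and a: "a \<in> \<Inter>(range (d_core J))"
  have ac: "a \<in> carrier R" using a by (auto simp: d_core_def)
  have "act \<alpha> g a \<in> d_core J h" for h
    unfolding d_core_def
  proof (intro CollectI conjI ballI)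
    show "act \<alpha> g a \<in> carrier R" using act_closed[OF \<alpha> ac] .
    fix \<beta> assume \<beta>: "\<beta> \<in> BW_basis I"
    show "act \<beta> h (act \<alpha> g a) \<in> J"
    proof (rule act_comp_ideal[OF J \<beta> \<alpha> ac])
      fix \<gamma> assume "\<gamma> \<in> BW_basis I"
      moreover have "a \<in> d_core J (h * g)" using a by blast
      ultimately show "act \<gamma> (h * g) a \<in> J" by (simp add: d_core_def)
    qed
  qed
  then show "act \<alpha> g a \<in> \<Inter>(range (d_core J))" by blast
qed

lemma min_prime_stabilizer_stable:
  assumes P: "P \<in> min_primes R" and g: "gpre R act g P = P" and \<alpha>: "\<alpha> \<in> BW_basis I" and a: "a \<in> P"
  shows "act \<alpha> g a \<in> P"
proof -
  have "act 0 g a \<in> P" using g a by (auto simp: gpre_def)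
  then show ?thesis
    using min_prime_D1_stable[OF P \<alpha>] act_split[OF \<alpha>] ideal.Icarr[OF min_primes_ideal[OF P] a] by simp
qed

lemma quot_act_rcos:
  assumes P: "P \<in> min_primes R" and g: "g \<in> stabilizer R act P" and \<alpha>: "\<alpha> \<in> BW_basis I"
    and a: "a \<in> carrier R"
  shows "quot_act R P (act \<alpha> g) (P +> a) = P +> act \<alpha> g a"
proof -
  have Pi: "ideal P R" using min_primes_ideal[OF P] .
  have sg: "abelian_subgroup P R" using abelian_subgroupI3[OF ideal.axioms(1)[OF Pi] is_abelian_group] .
  define y where "y = (SOME y. y \<in> P +> a)"
  have "a \<in> P +> a" using abelian_subgroup.a_rcos_self[OF sg a] .
  then have yY: "y \<in> P +> a" unfolding y_def by (rule someI)
  have yc: "y \<in> carrier R" using yY a_r_coset_subset_G[OF ideal.Icarr[OF Pi, THEN subsetI] a] by blast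
  have "y \<ominus> a \<in> P" using abelian_subgroup.a_rcos_module_minus[OF sg ring_axioms a yc] yY by simp
  then have "act \<alpha> g (y \<ominus> a) \<in> P"
    using min_prime_stabilizer_stable[OF P _ \<alpha>] g by (simp add: stabilizer_def)
  then have "P +> act \<alpha> g y = P +> act \<alpha> g a"
    using rcos_eq_iff[OF Pi act_closed[OF \<alpha> yc] act_closed[OF \<alpha> a]] act_minus[OF \<alpha> yc a] by simp
  then show ?thesis by (simp add: quot_act_def y_def)
qed

lemma quot_ideal_preimage:
  assumes P: "P \<in> min_primes R" and J: "ideal J (R Quot P)"
    and st: "\<forall>\<alpha>\<in>BW_basis I. \<forall>g\<in>stabilizer_all R act. \<forall>Y\<in>J. quot_act R P (act \<alpha> g) Y \<in> J"
  defines "J' \<equiv> {a \<in> carrier R. P +> a \<in> J}"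
  shows "ideal J' R" and "P \<subseteq> J'"
    and "\<And>a \<alpha> g. a \<in> J' \<Longrightarrow> \<alpha> \<in> BW_basis I \<Longrightarrow> g \<in> stabilizer_all R act \<Longrightarrow> act \<alpha> g a \<in> J'"
proof -
  have Pi: "ideal P R" using min_primes_ideal[OF P] .
  show "ideal J' R" unfolding J'_def
    using ring_hom_ring.ideal_vimage[OF ideal.rcos_ring_hom_ring[OF Pi] J] by simp
  have "P +> x \<in> J" if x: "x \<in> P" for x
  proof -
    have xc: "x \<in> carrier R" using ideal.Icarr[OF Pi x] .
    then have "P +> x = P +> \<zero>" using rcos_eq_iff[OF Pi xc zero_closed] x by (simp add: a_minus_def)
    also have "\<dots> = \<zero>\<^bsub>R Quot P\<^esub>" using rcos_zero[OF Pi] by (simp add: FactRing_def)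
    finally show ?thesis using J by (simp add: additive_subgroup.zero_closed ideal.axioms(1))
  qed
  then show "P \<subseteq> J'" using ideal.Icarr[OF Pi] by (auto simp: J'_def)
  fix a \<alpha> g assume a: "a \<in> J'" and \<alpha>: "\<alpha> \<in> BW_basis I" and g: "g \<in> stabilizer_all R act"
  then have ac: "a \<in> carrier R" and "P +> a \<in> J" by (auto simp: J'_def)
  then have "quot_act R P (act \<alpha> g) (P +> a) \<in> J" using st \<alpha> g by blast
  moreover have "g \<in> stabilizer R act P" using g P by (simp add: stabilizer_all_def)
  ultimately show "act \<alpha> g a \<in> J'"
    using quot_act_rcos[OF P _ \<alpha> ac] act_closed[OF \<alpha> ac] by (simp add: J'_def)
qed

text \<open>If \<open>J\<close> is \<open>D(G\<^sub>\<Omega>\<^sub>(\<^sub>R\<^sub>))\<close>-stable, \<open>j \<in> J\<close> and \<open>hh' \<in> G\<^sub>\<Omega>\<^sub>(\<^sub>R\<^sub>)\<close>, then all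
  \<open>D\<^sup>1 # h\<close>-translates of \<open>h'.j\<close> lie in \<open>J\<close>, since \<open>(e\<^sub>\<beta> # h)(1 # h')\<close> lies in \<open>D(G\<^sub>\<Omega>\<^sub>(\<^sub>R\<^sub>))\<close>.\<close>
lemma translate_in_d_core:
  assumes J: "ideal J R"
    and st: "\<And>a \<alpha> g. a \<in> J \<Longrightarrow> \<alpha> \<in> BW_basis I \<Longrightarrow> g \<in> stabilizer_all R act \<Longrightarrow> act \<alpha> g a \<in> J"
    and j: "j \<in> J" and hh': "h * h' \<in> stabilizer_all R act"
  shows "act 0 h' j \<in> d_core J h"
  unfolding d_core_def
proof (intro CollectI conjI ballI)
  have jc: "j \<in> carrier R" using ideal.Icarr[OF J j] .
  show "act 0 h' j \<in> carrier R" using act_closed[OF BW_basis_zero jc] .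
  fix \<beta> assume \<beta>: "\<beta> \<in> BW_basis I"
  show "act \<beta> h (act 0 h' j) \<in> J"
  proof (rule act_comp_ideal[OF J \<beta> BW_basis_zero jc])
    fix \<gamma> assume \<gamma>: "\<gamma> \<in> BW_basis I"
    have "act 0 (h * h') j \<in> J" using st[OF j BW_basis_zero hh'] .
    then have "act \<gamma> 1 (act 0 (h * h') j) \<in> J"
      using st[OF _ \<gamma>] stabilizer_all_one by blast
    then show "act \<gamma> (h * h') j \<in> J" using act_split[OF \<gamma> jc] by simp
  qed
qed

end

subsection \<open>The action of \<open>G\<close> on the minimal primes\<close>

locale noetherian_D_module_alg = D_module_alg + noetherian_cring R +
  assumes inj: "\<And>g. inj_on (act 0 g) (carrier R)"
begin

text \<open>Every minimal prime \<open>Q\<close> is of the form \<open>g\<^sup>-\<^sup>1(P')\<close>: the primes \<open>g\<^sup>-\<^sup>1(P')\<close> have nilpotent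
  intersection because \<open>g\<close> is injective, so one of them lies in \<open>Q\<close>.\<close>
lemma gpre_min_primes_cover:
  assumes Q: "Q \<in> min_primes R"
  shows "\<exists>P'\<in>min_primes R. gpre R act g P' = Q"
proof -
  let ?F = "gpre R act g ` min_primes R"
  have "\<exists>P''\<in>?F. P'' \<subseteq> Q"
  proof (rule prime_contains_one_of[OF min_primes_prime[OF Q]])
    show "finite ?F" using finite_min_primes by (rule finite_imageI)
    fix P assume "P \<in> ?F"
    then obtain P' where "P' \<in> min_primes R" "P = gpre R act g P'" by blast
    then show "ideal P R" using gpre_ideal[OF min_primes_ideal] by blast
  next
    fix y assume y: "y \<in> carrier R" and yF: "\<forall>P\<in>?F. y \<in> P"
    have gy: "act 0 g y \<in> carrier R" using act_closed[OF BW_basis_zero y] .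
    have "\<forall>P\<in>min_primes R. act 0 g y \<in> P"
    proof
      fix P assume "P \<in> min_primes R"
      then have "y \<in> gpre R act g P" using yF by blast
      then show "act 0 g y \<in> P" by (simp add: gpre_def)
    qed
    then obtain n :: nat where n: "act 0 g y [^] n = \<zero>"
      using in_all_min_primes_nilpotent[OF gy] by blast
    have "act 0 g (y [^] n) = act 0 g \<zero>"
      using ring_hom_ring.hom_nat_pow[OF gmap_ring_hom y] n act_zero[OF BW_basis_zero] by simp
    then have "y [^] n = \<zero>" using inj[of g] y zero_closed nat_pow_closed unfolding inj_on_def by blast
    then show "y \<in> Q" using nilpotent_in_prime[OF min_primes_prime[OF Q] y] by blast
  qed
  then obtain P' where P': "P' \<in> min_primes R" "gpre R act g P' \<subseteq> Q" by blast
  then have "gpre R act g P' = Q"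
    using min_primes_minimal[OF Q gpre_prime[OF min_primes_prime[OF P'(1)]]] by blast
  then show ?thesis using P' by blast
qed

text \<open>Since it covers the finite
  set \<open>\<Omega>(R)\<close> using only the \<open>P\<close> with \<open>g\<^sup>-\<^sup>1(P) \<in> \<Omega>(R)\<close>, those are all of \<open>\<Omega>(R)\<close>.\<close>
lemma gpre_min_prime:
  assumes P: "P \<in> min_primes R"
  shows "gpre R act g P \<in> min_primes R"
proof -
  define A where "A = {P\<in>min_primes R. gpre R act g P \<in> min_primes R}"
  have AO: "A \<subseteq> min_primes R" unfolding A_def by blast
  then have finA: "finite A" using finite_min_primes by (rule finite_subset)
  have "min_primes R \<subseteq> gpre R act g ` A"
  proof
    fix Q assume "Q \<in> min_primes R"
    then obtain P' where P': "P' \<in> min_primes R" "gpre R act g P' = Q"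
      using gpre_min_primes_cover by blast
    then have "P' \<in> A" using \<open>Q \<in> min_primes R\<close> unfolding A_def by blast
    then show "Q \<in> gpre R act g ` A" using P'(2) by blast
  qed
  then have "card (min_primes R) \<le> card (gpre R act g ` A)"
    using finite_imageI[OF finA] by (rule card_mono[rotated])
  also have "\<dots> \<le> card A" using finA by (rule card_image_le)
  finally have "card (min_primes R) \<le> card A" .
  moreover have "card A \<le> card (min_primes R)" using finite_min_primes AO by (rule card_mono)
  ultimately have "A = min_primes R" using card_subset_eq[OF finite_min_primes AO] by simp
  then show ?thesis using P unfolding A_def by blast
qed

lemma gpre_bij: "bij_betw (gpre R act g) (min_primes R) (min_primes R)"
proof -
  have onto: "min_primes R \<subseteq> gpre R act g ` min_primes R"
    using gpre_min_primes_cover by blast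
  then have "inj_on (gpre R act g) (min_primes R)"
    using finite_min_primes by (rule finite_surj_inj[rotated])
  moreover have "gpre R act g ` min_primes R \<subseteq> min_primes R"
    using gpre_min_prime by (rule image_subsetI)
  ultimately show ?thesis using onto unfolding bij_betw_def by blast
qed

text \<open>Some positive power of every \<open>h\<close> fixes all minimal primes, as \<open>h\<close> permutes the finite
  set \<open>\<Omega>(R)\<close>.\<close>
lemma power_in_stabilizer_all: "\<exists>d>0. h ^ d \<in> stabilizer_all R act"
proof -
  obtain d where "d > 0" and d: "\<forall>Q\<in>min_primes R. (gpre R act h ^^ d) Q = Q"
    using bij_funpow_periodic[OF finite_min_primes gpre_bij] by blast
  then have "h ^ d \<in> stabilizer_all R act"
    using gpre_power[OF ideal.Icarr[OF min_primes_ideal, THEN subsetI]]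
    by (simp add: stabilizer_all_def stabilizer_def)
  then show ?thesis using \<open>d > 0\<close> by blast
qed

text \<open>Elements acting alike on \<open>\<Omega>(R)\<close> can share \<open>h'\<close>, and there are finitely many actions.\<close>
lemma stabilizer_finite_reps:
  assumes P: "P \<in> min_primes R"
  shows "\<exists>H. finite H \<and> H \<subseteq> stabilizer R act P \<and>
           (\<forall>h\<in>stabilizer R act P. \<exists>h'\<in>H. h * h' \<in> stabilizer_all R act)"
proof -
  let ?\<Omega> = "min_primes R"
  let ?GP = "stabilizer R act P"
  define \<sigma> where "\<sigma> h = restrict (gpre R act h) ?\<Omega>" for h
  define inv_of where "inv_of h = h ^ ((SOME d. d > 0 \<and> h ^ d \<in> stabilizer_all R act) - 1)" for h
  define rep where "rep t = (SOME h. h \<in> ?GP \<and> \<sigma> h = t)" for t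
  define H where "H = (\<lambda>t. inv_of (rep t)) ` (\<sigma> ` ?GP)"
  have Pc: "P \<subseteq> carrier R" using ideal.Icarr[OF min_primes_ideal[OF P]] by blast
  have "\<sigma> ` ?GP \<subseteq> (\<Pi>\<^sub>E Q\<in>?\<Omega>. ?\<Omega>)" using gpre_min_prime by (auto simp: \<sigma>_def)
  moreover have "finite (\<Pi>\<^sub>E Q\<in>?\<Omega>. ?\<Omega>)" using finite_min_primes by (intro finite_PiE) auto
  ultimately have "finite H" unfolding H_def by (meson finite_imageI finite_subset)
  moreover have rep: "rep (\<sigma> h) \<in> ?GP" "\<sigma> (rep (\<sigma> h)) = \<sigma> h" if "h \<in> ?GP" for h
    using someI[of "\<lambda>h'. h' \<in> ?GP \<and> \<sigma> h' = \<sigma> h" h] that by (auto simp: rep_def)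
  moreover have inv: "r * inv_of r \<in> stabilizer_all R act" for r
  proof -
    define d where "d = (SOME d. d > 0 \<and> r ^ d \<in> stabilizer_all R act)"
    have "d > 0 \<and> r ^ d \<in> stabilizer_all R act"
      unfolding d_def using power_in_stabilizer_all by (rule someI_ex)
    then show ?thesis by (simp add: inv_of_def d_def[symmetric] power_Suc[symmetric])
  qed
  moreover have "inv_of r \<in> ?GP" if "r \<in> ?GP" for r
    unfolding inv_of_def using stabilizer_power[OF that Pc] .
  ultimately have "H \<subseteq> ?GP" "finite H" by (auto simp: H_def)
  moreover have "\<exists>h'\<in>H. h * h' \<in> stabilizer_all R act" if h: "h \<in> ?GP" for h
  proof -
    let ?r = "rep (\<sigma> h)"
    have same: "gpre R act h Q = gpre R act ?r Q" if "Q \<in> ?\<Omega>" for Q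
      using fun_cong[OF rep(2)[OF h], of Q] that by (simp add: \<sigma>_def)
    have "h * inv_of ?r \<in> stabilizer_all R act"
      using inv[of ?r] same by (simp add: stabilizer_all_def stabilizer_def gpre_mult)
    then show ?thesis using h by (auto simp: H_def)
  qed
  ultimately show ?thesis by blast
qed

text \<open>If \<open>J\<close> is \<open>D(G\<^sub>\<Omega>\<^sub>(\<^sub>R\<^sub>))\<close>-stable and \<open>j \<in> J - P\<close>, then \<open>y = \<Prod>\<^sub>h\<^sub>'\<^sub>\<in>\<^sub>H h'.j\<close> (with \<open>H\<close> as in
  \<open>stabilizer_finite_reps\<close>) lies outside \<open>P\<close> and has all its \<open>D(G\<^sub>P)\<close>-translates in \<open>J\<close>.\<close>
lemma stabilizer_core_element:
  assumes P: "P \<in> min_primes R" and J: "ideal J R"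
    and st: "\<And>a \<alpha> g. a \<in> J \<Longrightarrow> \<alpha> \<in> BW_basis I \<Longrightarrow> g \<in> stabilizer_all R act \<Longrightarrow> act \<alpha> g a \<in> J"
    and j: "j \<in> J" "j \<notin> P"
  shows "\<exists>y\<in>carrier R - P. \<forall>h\<in>stabilizer R act P. y \<in> d_core J h"
proof -
  have jc: "j \<in> carrier R" using ideal.Icarr[OF J j(1)] .
  obtain H where H: "finite H" "H \<subseteq> stabilizer R act P"
      and reps: "\<forall>h\<in>stabilizer R act P. \<exists>h'\<in>H. h * h' \<in> stabilizer_all R act"
    using stabilizer_finite_reps[OF P] by blast
  define y where "y = finprod R (\<lambda>h'. act 0 h' j) H"
  have fc: "(\<lambda>h'. act 0 h' j) \<in> H \<rightarrow> carrier R" using act_closed[OF BW_basis_zero jc] by blast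
  have yc: "y \<in> carrier R" unfolding y_def using fc by (rule finprod_closed)
  have yP: "y \<notin> P" unfolding y_def
  proof (rule prime_finprod_notin[OF min_primes_prime[OF P] H(1)])
    fix h' assume "h' \<in> H"
    then have fix_P: "gpre R act h' P = P" using H(2) by (simp add: stabilizer_def subset_iff)
    have "act 0 h' j \<notin> P"
    proof
      assume "act 0 h' j \<in> P"
      then have "j \<in> gpre R act h' P" using jc by (simp add: gpre_def)
      then show False using j(2) fix_P by simp
    qed
    then show "act 0 h' j \<in> carrier R - P" using act_closed[OF BW_basis_zero jc] by blast
  qed
  have "y \<in> d_core J h" if "h \<in> stabilizer R act P" for h
  proof -
    have "\<exists>h'\<in>H. h * h' \<in> stabilizer_all R act" using reps that by (rule bspec)
    then obtain h' where h': "h' \<in> H" "h * h' \<in> stabilizer_all R act" ..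
    show ?thesis unfolding y_def
      by (rule ideal_finprod_mem[OF d_core_ideal[OF J] H(1) fc h'(1) translate_in_d_core[OF J st j(1) h'(2)]])
  qed
  then show ?thesis using yc yP by blast
qed

end

subsection \<open>Simple Noetherian D-module algebras\<close>

locale simple_noetherian_D_module_alg = noetherian_D_module_alg +
  assumes simple: "D_simple I R act"
begin

lemma simple_cases: "ideal J R \<Longrightarrow> stable_under I act UNIV J \<Longrightarrow> J = {\<zero>} \<or> J = carrier R"
  using simple by (simp add: D_simple_def)

lemma stable_ideal_zero:
  assumes "ideal J R" "stable_under I act UNIV J" "\<one> \<notin> J"
  shows "J = {\<zero>}"
  using simple_cases[OF assms(1,2)] assms(3) by auto

text \<open>\<open>R\<close> is reduced: the nilradical \<open>\<Inter>\<Omega>(R)\<close> is a proper \<open>D\<close>-stable ideal.\<close>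
lemma Inter_min_primes_zero:
  assumes "\<one> \<noteq> \<zero>"
  shows "\<Inter>(min_primes R) = {\<zero>}"
proof (rule stable_ideal_zero)
  have ne: "min_primes R \<noteq> {}"
    using in_all_min_primes_nilpotent[of \<one>] assms by auto
  show J: "ideal (\<Inter>(min_primes R)) R"
    by (rule i_Intersect) (use ne min_primes_ideal in auto)
  show "stable_under I act UNIV (\<Inter>(min_primes R))"
  proof (rule stable_under_UNIV_I[OF J])
    fix a h assume a: "a \<in> \<Inter>(min_primes R)"
    show "act 0 h a \<in> \<Inter>(min_primes R)"
    proof
      fix Q assume "Q \<in> min_primes R"
      then have "a \<in> gpre R act h Q" using a gpre_min_prime by blast
      then show "act 0 h a \<in> Q" by (simp add: gpre_def)
    qed
  next
    fix a \<alpha> assume "a \<in> \<Inter>(min_primes R)" "\<alpha> \<in> BW_basis I"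
    then show "act \<alpha> 1 a \<in> \<Inter>(min_primes R)" using min_prime_D1_stable by blast
  qed
  show "\<one> \<notin> \<Inter>(min_primes R)"
    using ne prime_one_notin[OF min_primes_prime] by blast
qed

text \<open>The intersection of the
  orbit of \<open>P\<close> is a proper \<open>D\<close>-stable ideal, hence zero, hence contained in \<open>Q\<close>; by prime
  avoidance some \<open>g\<^sup>-\<^sup>1(P)\<close> lies in \<open>Q\<close>, and minimality gives equality.\<close>
lemma min_primes_transitive:
  assumes P: "P \<in> min_primes R" and Q: "Q \<in> min_primes R"
  shows "\<exists>g. gpre R act g P = Q"
proof -
  let ?orbit = "range (\<lambda>g. gpre R act g P)"
  have orbit: "?orbit \<subseteq> min_primes R" using gpre_min_prime[OF P] by blast
  have J: "ideal (\<Inter>?orbit) R"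
    by (rule i_Intersect) (use orbit min_primes_ideal in auto)
  have "\<Inter>?orbit = {\<zero>}"
  proof (rule stable_ideal_zero[OF J])
    show "stable_under I act UNIV (\<Inter>?orbit)"
    proof (rule stable_under_UNIV_I[OF J])
      fix a h assume a: "a \<in> \<Inter>?orbit"
      then have ac: "a \<in> carrier R" by (auto simp: gpre_def)
      have "act 0 h a \<in> gpre R act g P" for g
        using a ac gmap_comp act_closed[OF BW_basis_zero ac] by (auto simp: gpre_def)
      then show "act 0 h a \<in> \<Inter>?orbit" by blast
    next
      fix a \<alpha> assume "a \<in> \<Inter>?orbit" "\<alpha> \<in> BW_basis I"
      then show "act \<alpha> 1 a \<in> \<Inter>?orbit" using orbit min_prime_D1_stable by blast
    qed
    have "\<one> \<notin> gpre R act 1 P"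
      using prime_one_notin[OF min_primes_prime[OF P]] gpre_one[OF ideal.Icarr[OF min_primes_ideal[OF P], THEN subsetI]]
      by simp
    then show "\<one> \<notin> \<Inter>?orbit" by blast
  qed
  have "\<exists>W\<in>?orbit. W \<subseteq> Q"
  proof (rule prime_contains_one_of[OF min_primes_prime[OF Q]])
    show "finite ?orbit" using orbit finite_min_primes finite_subset by blast
    show "\<And>W. W \<in> ?orbit \<Longrightarrow> ideal W R" using orbit min_primes_ideal by blast
    show "y \<in> Q" if "y \<in> carrier R" "\<forall>W\<in>?orbit. y \<in> W" for y
    proof -
      have "y \<in> \<Inter>?orbit" using that(2) by blast
      then show ?thesis using \<open>\<Inter>?orbit = {\<zero>}\<close> ideal_zero[OF min_primes_ideal[OF Q]] by simp
    qed
  qed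
  then obtain g where "gpre R act g P \<subseteq> Q" by blast
  then show ?thesis using min_primes_minimal[OF Q gpre_prime[OF min_primes_prime[OF P]]] by blast
qed

definition vanish_off :: "'a set \<Rightarrow> 'a set" where
  "vanish_off P = {b \<in> carrier R. \<forall>Q\<in>min_primes R - {P}. b \<in> Q}"

lemma vanish_off_ideal: "ideal (vanish_off P) R"
proof -
  have "vanish_off P = \<Inter>(insert (carrier R) (min_primes R - {P}))"
    unfolding vanish_off_def by blast
  moreover have "ideal (\<Inter>(insert (carrier R) (min_primes R - {P}))) R"
    by (rule i_Intersect) (use oneideal min_primes_ideal in auto)
  ultimately show ?thesis by simp
qed

text \<open>\<open>\<Inter>\<^sub>P (P + vanish_off P)\<close>; it contains \<open>\<Sum>\<^sub>P vanish_off P\<close>, and equals \<open>R\<close> exactly when the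
  Chinese remainder theorem holds for \<open>\<Omega>(R)\<close>.\<close>
definition crt_ideal :: "'a set" where
  "crt_ideal = \<Inter>(insert (carrier R) ((\<lambda>P. P <+>\<^bsub>R\<^esub> vanish_off P) ` min_primes R))"

lemma crt_ideal_ideal: "ideal crt_ideal R"
  unfolding crt_ideal_def
  by (rule i_Intersect) (use oneideal add_ideals[OF min_primes_ideal vanish_off_ideal] in auto)

lemma crt_ideal_memI:
  assumes "a \<in> carrier R" "\<And>P. P \<in> min_primes R \<Longrightarrow> a \<in> P <+>\<^bsub>R\<^esub> vanish_off P"
  shows "a \<in> crt_ideal"
  using assms by (auto simp: crt_ideal_def)

text \<open>The ideal \<open>crt_ideal\<close> is \<open>D\<close>-stable: \<open>G\<close> permutes the minimal primes, and \<open>D\<^sup>1\<close> preserves each.\<close>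
lemma crt_ideal_stable: "stable_under I act UNIV crt_ideal"
proof (rule stable_under_UNIV_I[OF crt_ideal_ideal])
  fix a h assume a: "a \<in> crt_ideal"
  show "act 0 h a \<in> crt_ideal"
  proof (rule crt_ideal_memI)
    show "act 0 h a \<in> carrier R" using a act_closed[OF BW_basis_zero] by (auto simp: crt_ideal_def)
    fix Q assume Q: "Q \<in> min_primes R"
    have hQ: "gpre R act h Q \<in> min_primes R" using gpre_min_prime[OF Q] .
    then obtain p b where pb: "p \<in> gpre R act h Q" "b \<in> vanish_off (gpre R act h Q)" "a = p \<oplus> b"
      using a by (auto simp: crt_ideal_def set_add_def')
    have bc: "b \<in> carrier R" using pb(2) by (simp add: vanish_off_def)
    have "act 0 h b \<in> Q'" if Q': "Q' \<in> min_primes R - {Q}" for Q'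
    proof -
      have "gpre R act h Q' \<noteq> gpre R act h Q"
        using bij_betw_imp_inj_on[OF gpre_bij, of h] Q Q' unfolding inj_on_def by blast
      then have "b \<in> gpre R act h Q'" using pb(2) gpre_min_prime Q' by (simp add: vanish_off_def)
      then show ?thesis by (simp add: gpre_def)
    qed
    then have "act 0 h b \<in> vanish_off Q" using act_closed[OF BW_basis_zero bc] by (simp add: vanish_off_def)
    moreover have "act 0 h p \<in> Q" using pb(1) by (simp add: gpre_def)
    moreover have "act 0 h a = act 0 h p \<oplus> act 0 h b"
      using pb bc act_add[OF BW_basis_zero] by (simp add: gpre_def)
    ultimately show "act 0 h a \<in> Q <+>\<^bsub>R\<^esub> vanish_off Q" by (auto simp: set_add_def')
  qed
next
  fix a \<alpha> assume a: "a \<in> crt_ideal" and \<alpha>: "\<alpha> \<in> BW_basis I"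
  show "act \<alpha> 1 a \<in> crt_ideal"
  proof (rule crt_ideal_memI)
    show "act \<alpha> 1 a \<in> carrier R" using a act_closed[OF \<alpha>] by (auto simp: crt_ideal_def)
    fix P assume P: "P \<in> min_primes R"
    then obtain p b where pb: "p \<in> P" "b \<in> vanish_off P" "a = p \<oplus> b"
      using a by (auto simp: crt_ideal_def set_add_def')
    have pc: "p \<in> carrier R" and bc: "b \<in> carrier R"
      using pb ideal.Icarr[OF min_primes_ideal[OF P]] by (auto simp: vanish_off_def)
    have "act \<alpha> 1 b \<in> vanish_off P"
      using pb(2) act_closed[OF \<alpha> bc] min_prime_D1_stable[OF _ \<alpha>] by (auto simp: vanish_off_def)
    moreover have "act \<alpha> 1 p \<in> P" using min_prime_D1_stable[OF P \<alpha> pb(1)] .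
    ultimately show "act \<alpha> 1 a \<in> P <+>\<^bsub>R\<^esub> vanish_off P"
      using act_add[OF \<alpha> pc bc] pb(3) by (auto simp: set_add_def')
  qed
qed

text \<open>\<open>crt_ideal\<close> contains an element separating some minimal prime from the others, so it is
  nonzero and hence all of \<open>R\<close>.\<close>
lemma crt_ideal_eq_carrier:
  assumes P0: "P0 \<in> min_primes R"
  shows "crt_ideal = carrier R"
proof -
  obtain b where b: "b \<in> carrier R" "b \<notin> P0" "\<forall>Q\<in>min_primes R - {P0}. b \<in> Q"
    using min_prime_separation[OF P0] by blast
  have "b \<in> crt_ideal"
  proof (rule crt_ideal_memI[OF b(1)])
    fix P assume P: "P \<in> min_primes R"
    have zeros: "\<zero> \<in> P" "\<zero> \<in> vanish_off P"
      using ideal_zero[OF min_primes_ideal[OF P]] ideal_zero[OF vanish_off_ideal] by auto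
    show "b \<in> P <+>\<^bsub>R\<^esub> vanish_off P"
    proof (cases "P = P0")
      case True
      then have "b \<in> vanish_off P" using b by (simp add: vanish_off_def)
      then show ?thesis using set_add_memI[OF zeros(1)] b(1) by (metis l_zero)
    next
      case False
      then have "b \<in> P" using b P by blast
      then show ?thesis using set_add_memI[OF _ zeros(2)] b(1) by (metis r_zero)
    qed
  qed
  moreover have "b \<noteq> \<zero>" using b(2) ideal_zero[OF min_primes_ideal[OF P0]] by blast
  ultimately have "crt_ideal \<noteq> {\<zero>}" by blast
  then show ?thesis using simple_cases[OF crt_ideal_ideal crt_ideal_stable] by blast
qed

lemma crt_unit_exists:
  assumes P: "P \<in> min_primes R"
  shows "\<exists>e\<in>carrier R. e \<ominus> \<one> \<in> P \<and> (\<forall>Q\<in>min_primes R - {P}. e \<in> Q)"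
proof -
  have "\<one> \<in> P <+>\<^bsub>R\<^esub> vanish_off P" using crt_ideal_eq_carrier[OF P] P by (auto simp: crt_ideal_def)
  then obtain p e where pe: "p \<in> P" "e \<in> vanish_off P" "\<one> = p \<oplus> e" by (auto simp: set_add_def')
  have pc: "p \<in> carrier R" and ec: "e \<in> carrier R"
    using pe ideal.Icarr[OF min_primes_ideal[OF P]] by (auto simp: vanish_off_def)
  have "e \<ominus> \<one> = \<ominus> p" unfolding pe(3) using pc ec by algebra
  then have "e \<ominus> \<one> \<in> P" using pe(1) ideal_neg[OF min_primes_ideal[OF P]] by simp
  then show ?thesis using pe(2) ec by (auto simp: vanish_off_def)
qed

lemma crt_sum:
  assumes Q: "Q \<in> min_primes R"
    and r: "\<And>P. P \<in> min_primes R \<Longrightarrow> r P \<in> carrier R"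
    and e: "\<And>P. P \<in> min_primes R \<Longrightarrow> e P \<in> carrier R \<and> e P \<ominus> \<one> \<in> P \<and> (\<forall>Q\<in>min_primes R - {P}. e P \<in> Q)"
  shows "finsum R (\<lambda>P. r P \<otimes> e P) (min_primes R) \<ominus> r Q \<in> Q"
proof -
  let ?g = "\<lambda>P. r P \<otimes> e P"
  have gc: "?g \<in> min_primes R \<rightarrow> carrier R" using r e by auto
  have fin: "finite (min_primes R - {Q})" using finite_min_primes by simp
  have eq: "min_primes R = insert Q (min_primes R - {Q})" using Q by blast
  have s: "finsum R ?g (min_primes R) = ?g Q \<oplus> finsum R ?g (min_primes R - {Q})"
    by (subst eq, rule finsum_insert) (use fin gc Q in auto)
  have rest: "finsum R ?g (min_primes R - {Q}) \<in> Q"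
  proof (rule ideal_finsum_closed[OF min_primes_ideal[OF Q] fin])
    fix P assume P: "P \<in> min_primes R - {Q}"
    then have "e P \<in> Q" using e Q by blast
    then show "r P \<otimes> e P \<in> Q" using ideal.I_l_closed[OF min_primes_ideal[OF Q]] r P by blast
  qed
  have rc: "finsum R ?g (min_primes R - {Q}) \<in> carrier R" using gc by (auto intro: finsum_closed)
  have rQ: "r Q \<in> carrier R" "e Q \<in> carrier R" using r e Q by auto
  have alg: "?g Q \<oplus> finsum R ?g (min_primes R - {Q}) \<ominus> r Q
      = r Q \<otimes> (e Q \<ominus> \<one>) \<oplus> finsum R ?g (min_primes R - {Q})"
    using crt_rearrange[OF rQ(1) rQ(2) rc] by simp
  have "r Q \<otimes> (e Q \<ominus> \<one>) \<in> Q" using e[OF Q] rQ ideal.I_l_closed[OF min_primes_ideal[OF Q]] by blast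
  then have "r Q \<otimes> (e Q \<ominus> \<one>) \<oplus> finsum R ?g (min_primes R - {Q}) \<in> Q"
    using rest ideal_add[OF min_primes_ideal[OF Q]] by blast
  then show ?thesis using s alg by simp
qed

text \<open>The canonical map \<open>R \<rightarrow> \<Prod>\<^sub>P R/P\<close> is injective since \<open>R\<close> is reduced.\<close>
lemma crt_map_inj: "inj_on (\<lambda>r. \<lambda>P\<in>min_primes R. P +> r) (carrier R)"
proof (cases "\<one> = \<zero>")
  case True
  then have "carrier R = {\<zero>}" by (rule one_zeroD)
  then show ?thesis by simp
next
  case False
  show ?thesis
  proof (rule inj_onI)
    fix x y assume x: "x \<in> carrier R" and y: "y \<in> carrier R"
      and eq: "(\<lambda>P\<in>min_primes R. P +> x) = (\<lambda>P\<in>min_primes R. P +> y)"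
    have "x \<ominus> y \<in> \<Inter>(min_primes R)"
    proof
      fix P assume P: "P \<in> min_primes R"
      have "P +> x = P +> y" using fun_cong[OF eq, of P] P by simp
      then show "x \<ominus> y \<in> P" using rcos_eq_iff[OF min_primes_ideal[OF P] x y] by simp
    qed
    then have "x \<ominus> y = \<zero>" using Inter_min_primes_zero[OF False] by blast
    moreover have "x = (x \<ominus> y) \<oplus> y" using x y by (simp add: a_minus_def a_assoc l_neg)
    ultimately show "x = y" using y by simp
  qed
qed

text \<open>It is surjective: \<open>(P +> r\<^sub>P)\<^sub>P\<close> is the image of \<open>\<Sum>\<^sub>P r\<^sub>P e\<^sub>P\<close>, with \<open>e\<^sub>P\<close> from
  \<open>crt_unit_exists\<close>.\<close>
lemma crt_map_onto: "carrier (prod_quot R (min_primes R)) \<subseteq> (\<lambda>r. \<lambda>P\<in>min_primes R. P +> r) ` carrier R"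
proof
  fix f assume "f \<in> carrier (prod_quot R (min_primes R))"
  then have fP: "f \<in> (\<Pi>\<^sub>E P\<in>min_primes R. carrier (R Quot P))" unfolding prod_quot_def by simp
  have "\<forall>P\<in>min_primes R. \<exists>r\<in>carrier R. f P = P +> r"
    using fP quot_carrier_rep by blast
  then obtain r where r: "\<And>P. P \<in> min_primes R \<Longrightarrow> r P \<in> carrier R \<and> f P = P +> r P"
    by metis
  have "\<forall>P\<in>min_primes R. \<exists>e\<in>carrier R. e \<ominus> \<one> \<in> P \<and> (\<forall>Q\<in>min_primes R - {P}. e \<in> Q)"
    using crt_unit_exists by blast
  then obtain e where e: "\<And>P. P \<in> min_primes R \<Longrightarrow>
      e P \<in> carrier R \<and> e P \<ominus> \<one> \<in> P \<and> (\<forall>Q\<in>min_primes R - {P}. e P \<in> Q)"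
    by metis
  define s where "s = finsum R (\<lambda>P. r P \<otimes> e P) (min_primes R)"
  have sc: "s \<in> carrier R" unfolding s_def using r e by (auto intro: finsum_closed)
  have "(\<lambda>P\<in>min_primes R. P +> s) = f"
  proof (rule ext)
    fix Q show "(\<lambda>P\<in>min_primes R. P +> s) Q = f Q"
    proof (cases "Q \<in> min_primes R")
      case True
      have "s \<ominus> r Q \<in> Q" unfolding s_def by (rule crt_sum[OF True]) (use r e in auto)
      then have "Q +> s = Q +> r Q" using rcos_eq_iff[OF min_primes_ideal[OF True] sc] r True by blast
      then show ?thesis using True r by simp
    next
      case False
      then show ?thesis using fP by (simp add: PiE_def extensional_def)
    qed
  qed
  then show "f \<in> (\<lambda>r. \<lambda>P\<in>min_primes R. P +> r) ` carrier R" using sc by blast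
qed

lemma crt_iso: "(\<lambda>r. \<lambda>P\<in>min_primes R. P +> r) \<in> ring_iso R (prod_quot R (min_primes R))"
proof (rule ring_iso_memI)
  let ?h = "\<lambda>r. \<lambda>P\<in>min_primes R. P +> r"
  have hom: "\<And>P. P \<in> min_primes R \<Longrightarrow> (+>) P \<in> ring_hom R (R Quot P)"
    using ideal.rcos_ring_hom min_primes_ideal by blast
  show hc: "?h x \<in> carrier (prod_quot R (min_primes R))" if x: "x \<in> carrier R" for x
    unfolding prod_quot_def using ring_hom_closed[OF hom x] by auto
  show "?h (x \<otimes> y) = ?h x \<otimes>\<^bsub>prod_quot R (min_primes R)\<^esub> ?h y"
    if "x \<in> carrier R" "y \<in> carrier R" for x y
    unfolding prod_quot_def using ring_hom_mult[OF hom] that by (auto intro: restrict_ext)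
  show "?h (x \<oplus> y) = ?h x \<oplus>\<^bsub>prod_quot R (min_primes R)\<^esub> ?h y"
    if "x \<in> carrier R" "y \<in> carrier R" for x y
    unfolding prod_quot_def using ring_hom_add[OF hom] that by (auto intro: restrict_ext)
  show "?h \<one> = \<one>\<^bsub>prod_quot R (min_primes R)\<^esub>"
    unfolding prod_quot_def using ring_hom_one[OF hom] by (auto intro: restrict_ext)
  show "bij_betw ?h (carrier R) (carrier (prod_quot R (min_primes R)))"
    unfolding bij_betw_def using crt_map_inj crt_map_onto hc by blast
qed

text \<open>Let \<open>J \<supseteq> P\<close> be \<open>D(G\<^sub>\<Omega>\<^sub>(\<^sub>R\<^sub>))\<close>-stable with some \<open>j \<in> J - P\<close>.
  With \<open>y\<close> as in \<open>stabilizer_core_element\<close> and \<open>e \<equiv> 1 (mod P)\<close> vanishing on the other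
  minimal primes, \<open>a = ey\<close> lies outside \<open>P\<close>, and all its \<open>D\<close>-translates lie in \<open>J\<close>:
  for \<open>h \<in> G\<^sub>P\<close> thanks to \<open>y\<close>, for \<open>h \<notin> G\<^sub>P\<close> because then \<open>h.e \<in> P\<close>.\<close>
lemma d_core_witness:
  assumes P: "P \<in> min_primes R" and J: "ideal J R" and PJ: "P \<subseteq> J"
    and st: "\<And>a \<alpha> g. a \<in> J \<Longrightarrow> \<alpha> \<in> BW_basis I \<Longrightarrow> g \<in> stabilizer_all R act \<Longrightarrow> act \<alpha> g a \<in> J"
    and j: "j \<in> J" "j \<notin> P"
  shows "\<exists>a\<in>carrier R - P. \<forall>h. a \<in> d_core J h"
proof -
  obtain y where y: "y \<in> carrier R" "y \<notin> P" and y_core: "\<And>h. h \<in> stabilizer R act P \<Longrightarrow> y \<in> d_core J h"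
    using stabilizer_core_element[OF P J st j] by blast
  obtain e where e: "e \<in> carrier R" "e \<ominus> \<one> \<in> P" "\<forall>Q\<in>min_primes R - {P}. e \<in> Q"
    using crt_unit_exists[OF P] by blast
  have eP: "e \<notin> P"
  proof
    assume "e \<in> P"
    then have "e \<ominus> (e \<ominus> \<one>) \<in> P" using e(2) ideal_minus[OF min_primes_ideal[OF P]] by blast
    moreover have "e \<ominus> (e \<ominus> \<one>) = \<one>" using e(1) by (simp add: a_minus_def minus_add a_assoc[symmetric] r_neg)
    ultimately show False using prime_one_notin[OF min_primes_prime[OF P]] by simp
  qed
  have "e \<otimes> y \<in> d_core J h" for h
    unfolding d_core_def
  proof (intro CollectI conjI ballI)
    show "e \<otimes> y \<in> carrier R" using e(1) y(1) by simp
    fix \<beta> assume \<beta>: "\<beta> \<in> BW_basis I"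
    show "act \<beta> h (e \<otimes> y) \<in> J"
    proof (rule act_mult_ideal[OF J \<beta> e(1) y(1)])
      fix \<beta>1 \<beta>2 assume "(\<beta>1, \<beta>2) \<in> splits \<beta>"
      note \<beta>12 = BW_basis_splits[OF \<beta> this]
      show "act \<beta>1 h e \<otimes> act \<beta>2 h y \<in> J"
      proof (cases "h \<in> stabilizer R act P")
        case True
        then have "act \<beta>2 h y \<in> J" using y_core \<beta>12 by (simp add: d_core_def)
        then show ?thesis using ideal.I_l_closed[OF J _ act_closed[OF \<beta>12(1) e(1)]] by blast
      next
        case False
        then have "e \<in> gpre R act h P"
          using e(3) gpre_min_prime[OF P] by (auto simp: stabilizer_def)
        then have "act \<beta>1 h e \<in> P"
          using min_prime_D1_stable[OF P \<beta>12(1)] act_split[OF \<beta>12(1) e(1)] by (simp add: gpre_def)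
        then show ?thesis using PJ ideal.I_r_closed[OF J _ act_closed[OF \<beta>12(2) y(1)]] by blast
      qed
    qed
  qed
  moreover have "e \<otimes> y \<notin> P" using primeideal.I_prime[OF min_primes_prime[OF P] e(1) y(1)] eP y(2) by blast
  ultimately show ?thesis using e(1) y(1) by blast
qed

text \<open>Hence a \<open>D(G\<^sub>\<Omega>\<^sub>(\<^sub>R\<^sub>))\<close>-stable ideal properly containing \<open>P\<close> is everything: the largest
  \<open>D\<close>-stable ideal inside it is nonzero, hence \<open>R\<close>.\<close>
lemma stable_ideal_over_min_prime:
  assumes P: "P \<in> min_primes R" and J: "ideal J R" and PJ: "P \<subseteq> J"
    and st: "\<And>a \<alpha> g. a \<in> J \<Longrightarrow> \<alpha> \<in> BW_basis I \<Longrightarrow> g \<in> stabilizer_all R act \<Longrightarrow> act \<alpha> g a \<in> J"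
    and j: "j \<in> J" "j \<notin> P"
  shows "\<one> \<in> J"
proof -
  let ?K = "\<Inter>(range (d_core J))"
  have K: "ideal ?K R" by (rule i_Intersect) (use d_core_ideal[OF J] in auto)
  obtain a where "a \<in> carrier R - P" "\<forall>h. a \<in> d_core J h" using d_core_witness[OF assms] by blast
  then have "a \<in> ?K" "a \<noteq> \<zero>" using ideal_zero[OF min_primes_ideal[OF P]] by auto
  then have "?K \<noteq> {\<zero>}" by blast
  then have "?K = carrier R" using simple_cases[OF K Inter_d_core_stable[OF J]] by blast
  then have "\<one> \<in> d_core J 1" by blast
  then show ?thesis using d_core_subset by blast
qed

lemma quot_simple_min_prime:
  assumes P: "P \<in> min_primes R"
  shows "quot_simple I R act (stabilizer_all R act) P"
  unfolding quot_simple_def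
proof (intro allI impI)
  fix J assume "ideal J (R Quot P) \<and>
      (\<forall>\<alpha>\<in>BW_basis I. \<forall>g\<in>stabilizer_all R act. \<forall>Y\<in>J. quot_act R P (act \<alpha> g) Y \<in> J)"
  then have J: "ideal J (R Quot P)"
    and st: "\<forall>\<alpha>\<in>BW_basis I. \<forall>g\<in>stabilizer_all R act. \<forall>Y\<in>J. quot_act R P (act \<alpha> g) Y \<in> J"
    by blast+
  define J' where "J' = {a \<in> carrier R. P +> a \<in> J}"
  note J' = quot_ideal_preimage[OF P J st, folded J'_def]
  show "J = {\<zero>\<^bsub>R Quot P\<^esub>} \<or> J = carrier (R Quot P)"
  proof (cases "J \<subseteq> {\<zero>\<^bsub>R Quot P\<^esub>}")
    case True
    then show ?thesis using J by (auto simp: additive_subgroup.zero_closed ideal.axioms(1))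
  next
    case False
    then obtain Y where Y: "Y \<in> J" "Y \<noteq> \<zero>\<^bsub>R Quot P\<^esub>" by blast
    then obtain j where jc: "j \<in> carrier R" and Yj: "Y = P +> j"
      using quot_carrier_rep ideal.Icarr[OF J] by blast
    have "j \<notin> P"
    proof
      assume "j \<in> P"
      then have "P +> j = P +> \<zero>"
        using rcos_eq_iff[OF min_primes_ideal[OF P] jc zero_closed] jc by (simp add: a_minus_def)
      then show False using Y(2) Yj rcos_zero[OF min_primes_ideal[OF P]] by (simp add: FactRing_def)
    qed
    moreover have "j \<in> J'" using Y Yj jc by (simp add: J'_def)
    ultimately have "\<one> \<in> J'" using stable_ideal_over_min_prime[OF P J'(1) J'(2) J'(3)] by blast
    then have "\<one>\<^bsub>R Quot P\<^esub> \<in> J" by (simp add: J'_def FactRing_def)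
    then show ?thesis using J by (simp add: ideal.one_imp_carrier)
  qed
qed

end

theorem mainTheorem10:
  fixes I :: "'i set"
    and m :: "'i mon \<Rightarrow> 'i mon \<Rightarrow> ('i, 'c::field) vec"
    and gact :: "'g::monoid_mult \<Rightarrow> 'i mon \<Rightarrow> ('i, 'c) vec"
    and R :: "('a, 'b) ring_scheme"
    and smul :: "'c \<Rightarrow> 'a \<Rightarrow> 'a"
    and act :: "'i mon \<Rightarrow> 'g \<Rightarrow> 'a \<Rightarrow> 'a"
  assumes hopf: "BW_hopf I m"
    and CG: "CG_module_algebra I m gact"
    and modalg: "D_module_algebra I m gact R smul act"
    and comm: "cring R"
    and noeth: "noetherian_ring R"
    and simple: "D_simple I R act"
    and inj: "\<And>g. inj_on (gmap act g) (carrier R)"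
  shows "(\<forall>P\<in>min_primes R.
            stable_under I act {1} P \<and>
            stable_under I act (stabilizer R act P) P \<and> domain (R Quot P) \<and>
            quot_simple I R act (stabilizer_all R act) P)
       \<and> (\<forall>P\<in>min_primes R. \<forall>g. gpre R act g P \<in> min_primes R)
       \<and> (\<forall>P\<in>min_primes R. \<forall>Q\<in>min_primes R. \<exists>g. gpre R act g P = Q)
       \<and> (\<lambda>r. \<lambda>P\<in>min_primes R. a_r_coset R P r) \<in> ring_iso R (prod_quot R (min_primes R))"
proof -
  interpret cring R by (rule comm)
  interpret noetherian_ring R by (rule noeth)
  interpret simple_noetherian_D_module_alg R I m gact smul act
    by unfold_locales (use hopf CG modalg simple inj in auto)
  show ?thesis
  proof (intro conjI ballI allI)
    fix P assume P: "P \<in> min_primes R"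
    show "stable_under I act {1} P"
      using min_prime_D1_stable[OF P] by (simp add: stable_under_def)
    show "stable_under I act (stabilizer R act P) P"
      using min_prime_stabilizer_stable[OF P] by (simp add: stable_under_def stabilizer_def)
    show "domain (R Quot P)"
      using primeideal.quotient_is_domain[OF min_primes_prime[OF P]] .
    show "quot_simple I R act (stabilizer_all R act) P"
      by (rule quot_simple_min_prime[OF P])
  next
    fix P g assume "P \<in> min_primes R"
    then show "gpre R act g P \<in> min_primes R" by (rule gpre_min_prime)
  next
    fix P Q assume "P \<in> min_primes R" "Q \<in> min_primes R"
    then show "\<exists>g. gpre R act g P = Q" by (rule min_primes_transitive)
  next
    show "(\<lambda>r. \<lambda>P\<in>min_primes R. a_r_coset R P r) \<in> ring_iso R (prod_quot R (min_primes R))"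
      by (rule crt_iso)
  qed
qed

end
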